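(* Let $G$ be a second countable, locally Hausdorff, locally compact groupoid with a Haar system, let $Q$ be a locally compact group with identity $e$, and let $c:G\to Q$ be a continuous homomorphism such that $c^{-1}(e)$ is amenable. Let $\tilde s:G\to G^{(0)}\times Q$, $\tilde s(\gamma)=(s(\gamma),c(\gamma))$, and $Y=\tilde s(G)$. Then the Borel groupoids $G(c)|_Y$ and $c^{-1}(e)$ are Borel equivalent.
   Context: The skew-product groupoid is $G(c)=\{(a,\gamma,b)\in Q\times G\times Q: b=ac(\gamma)\}$ with $(a,\eta,b)(b,\gamma,d)=(a,\eta\gamma,d)$, $(a,\gamma,b)^{-1}=(b,\gamma^{-1},a)$, unit space $G^{(0)}\times Q$, $r(a,\gamma,b)=(r(\gamma),a)$, $s(a,\gamma,b)=(s(\gamma),b)$. $G(c)|_Y=\{g\in G(c): r(g),s(g)\in Y\}$. All groupoids carry the Borel structures induced by their topologies. A $(G_1,G_2)$-Borel equivalence between Borel groupoids is a Borel space $Z$ which is a free and proper left Borel $G_1$-space and a free and proper right Borel $G_2$-space, the actions commute, the moment map $Z\to G_1^{(0)}$ induces a Borel isomorphism $Z/G_2\cong G_1^{(0)}$, and the moment map $Z\to G_2^{(0)}$ induces a Borel isomorphism $G_1\backslash Z\cong G_2^{(0)}$. A left Borel $G_1$-space $Z$ is proper if there is a Borel family $\{m^z\}_{z\in Z}$ of probability measures on $G_1$ with $m^z$ supported on $G_1^{r(z)}$ and $\gamma\cdot m^z=m^{\gamma\cdot z}$ (right actions analogously). *)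

theory Defs
  imports "HOL-Probability.Probability"
begin

record ('g,'u) tgroupoid =
  g_arr  :: "'g set"
  g_obj  :: "'u set"
  g_r    :: "'g \<Rightarrow> 'u"
  g_s    :: "'g \<Rightarrow> 'u"
  g_mul  :: "'g \<Rightarrow> 'g \<Rightarrow> 'g"   \<comment> \<open>g_mul x y defined when g_s x = g_r y\<close>
  g_inv  :: "'g \<Rightarrow> 'g"
  g_id   :: "'u \<Rightarrow> 'g"
  g_top  :: "'g topology"
  g_otop :: "'u topology"

definition groupoid :: "('g,'u,'x) tgroupoid_scheme \<Rightarrow> bool" where
  "groupoid G \<longleftrightarrow>
     (\<forall>x\<in>g_arr G. g_r G x \<in> g_obj G \<and> g_s G x \<in> g_obj G) \<and>
     (\<forall>u\<in>g_obj G. g_id G u \<in> g_arr G \<and> g_r G (g_id G u) = u \<and> g_s G (g_id G u) = u) \<and>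
     (\<forall>x\<in>g_arr G. \<forall>y\<in>g_arr G. g_s G x = g_r G y \<longrightarrow>
        g_mul G x y \<in> g_arr G \<and> g_r G (g_mul G x y) = g_r G x \<and> g_s G (g_mul G x y) = g_s G y) \<and>
     (\<forall>x\<in>g_arr G. \<forall>y\<in>g_arr G. \<forall>z\<in>g_arr G. g_s G x = g_r G y \<longrightarrow> g_s G y = g_r G z \<longrightarrow>
        g_mul G (g_mul G x y) z = g_mul G x (g_mul G y z)) \<and>
     (\<forall>x\<in>g_arr G. g_mul G (g_id G (g_r G x)) x = x \<and> g_mul G x (g_id G (g_s G x)) = x) \<and>
     (\<forall>x\<in>g_arr G. g_inv G x \<in> g_arr G \<and> g_r G (g_inv G x) = g_s G x \<and> g_s G (g_inv G x) = g_r G x \<and>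
        g_mul G (g_inv G x) x = g_id G (g_s G x) \<and> g_mul G x (g_inv G x) = g_id G (g_r G x))"

definition composable :: "('g,'u,'x) tgroupoid_scheme \<Rightarrow> ('g \<times> 'g) set" where
  "composable G = {(x,y). x \<in> g_arr G \<and> y \<in> g_arr G \<and> g_s G x = g_r G y}"

text \<open>Unit space is identified with its image under g_id: g_id is a topological embedding.\<close>
definition topological_groupoid :: "('g,'u,'x) tgroupoid_scheme \<Rightarrow> bool" where
  "topological_groupoid G \<longleftrightarrow> groupoid G \<and>
     topspace (g_top G) = g_arr G \<and> topspace (g_otop G) = g_obj G \<and>
     continuous_map (g_top G) (g_otop G) (g_r G) \<and>
     continuous_map (g_top G) (g_otop G) (g_s G) \<and>
     continuous_map (g_top G) (g_top G) (g_inv G) \<and>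
     continuous_map (subtopology (prod_topology (g_top G) (g_top G)) (composable G)) (g_top G)
        (\<lambda>(x,y). g_mul G x y) \<and>
     homeomorphic_map (g_otop G) (subtopology (g_top G) (g_id G ` g_obj G)) (g_id G)"

definition range_fibre :: "('g,'u,'x) tgroupoid_scheme \<Rightarrow> 'u \<Rightarrow> 'g set" where
  "range_fibre G u = {x \<in> g_arr G. g_r G x = u}"

definition source_fibre :: "('g,'u,'x) tgroupoid_scheme \<Rightarrow> 'u \<Rightarrow> 'g set" where
  "source_fibre G u = {x \<in> g_arr G. g_s G x = u}"

definition locally_Hausdorff :: "'a topology \<Rightarrow> bool" where
  "locally_Hausdorff X \<longleftrightarrow>
     (\<forall>x\<in>topspace X. \<exists>U. openin X U \<and> x \<in> U \<and> Hausdorff_space (subtopology X U))"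

text \<open>Local compactness for possibly non-Hausdorff spaces: every point has a neighbourhood
  base of compact Hausdorff sets.\<close>
definition locally_compact_nH :: "'a topology \<Rightarrow> bool" where
  "locally_compact_nH X \<longleftrightarrow>
     (\<forall>x U. openin X U \<and> x \<in> U \<longrightarrow>
        (\<exists>V K. openin X V \<and> compactin X K \<and> Hausdorff_space (subtopology X K) \<and>
               x \<in> V \<and> V \<subseteq> K \<and> K \<subseteq> U))"

definition lc_groupoid :: "('g,'u,'x) tgroupoid_scheme \<Rightarrow> bool" where
  "lc_groupoid G \<longleftrightarrow> topological_groupoid G \<and> locally_compact_nH (g_top G) \<and>
     Hausdorff_space (g_otop G) \<and>
     (\<forall>u\<in>g_obj G. Hausdorff_space (subtopology (g_top G) (range_fibre G u)))"

definition borel_of :: "'a topology \<Rightarrow> 'a measure" where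
  "borel_of X = sigma (topspace X) {U. openin X U}"

text \<open>Generators of C_c(G) for a locally Hausdorff space: functions that are continuous with
  compact support on some open Hausdorff subset U and vanish off U (C_c(G) is their span).\<close>
definition cc_gen :: "'a topology \<Rightarrow> ('a \<Rightarrow> real) \<Rightarrow> bool" where
  "cc_gen X f \<longleftrightarrow> (\<exists>U K. openin X U \<and> Hausdorff_space (subtopology X U) \<and>
      continuous_map (subtopology X U) euclideanreal f \<and>
      compactin X K \<and> K \<subseteq> U \<and> (\<forall>x. x \<notin> K \<longrightarrow> f x = 0))"

definition haar_system :: "('g,'u,'x) tgroupoid_scheme \<Rightarrow> ('u \<Rightarrow> 'g measure) \<Rightarrow> bool" where
  "haar_system G lam \<longleftrightarrow>
     (\<forall>u\<in>g_obj G.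
        sets (lam u) = sets (borel_of (g_top G)) \<and>
        (\<forall>x\<in>g_arr G. \<exists>V. openin (g_top G) V \<and> x \<in> V \<and> emeasure (lam u) V < \<infinity>) \<and>
        emeasure (lam u) (g_arr G - range_fibre G u) = 0 \<and>
        (\<forall>V. openin (g_top G) V \<and> V \<inter> range_fibre G u \<noteq> {} \<longrightarrow> emeasure (lam u) V > 0)) \<and>
     (\<forall>x\<in>g_arr G. \<forall>E\<in>sets (borel_of (g_top G)).
        emeasure (lam (g_s G x)) {y \<in> range_fibre G (g_s G x). g_mul G x y \<in> E}
          = emeasure (lam (g_r G x)) E) \<and>
     (\<forall>f. cc_gen (g_top G) f \<longrightarrow>
        continuous_map (g_otop G) euclideanreal (\<lambda>u. integral\<^sup>L (lam u) f))"

definition has_haar_system :: "('g,'u,'x) tgroupoid_scheme \<Rightarrow> bool" where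
  "has_haar_system G \<longleftrightarrow> (\<exists>lam. haar_system G lam)"

text \<open>Topological amenability (Anantharaman-Delaroche--Renault): a (sequential, by second
  countability) topological approximate invariant mean.\<close>
definition inv_defect ::
  "('g,'u,'x) tgroupoid_scheme \<Rightarrow> ('u \<Rightarrow> 'g measure) \<Rightarrow> 'g \<Rightarrow> real" where
  "inv_defect G m x = (SUP A\<in>sets (borel_of (g_top G)).
      \<bar>measure (m (g_s G x)) {y \<in> range_fibre G (g_s G x). g_mul G x y \<in> A}
        - measure (m (g_r G x)) A\<bar>)"

definition top_amenable :: "('g,'u,'x) tgroupoid_scheme \<Rightarrow> bool" where
  "top_amenable G \<longleftrightarrow> (\<exists>m :: nat \<Rightarrow> 'u \<Rightarrow> 'g measure.
     (\<forall>i. \<forall>u\<in>g_obj G. prob_space (m i u) \<and> sets (m i u) = sets (borel_of (g_top G)) \<and>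
            emeasure (m i u) (range_fibre G u) = 1) \<and>
     (\<forall>i f. cc_gen (g_top G) f \<longrightarrow>
            continuous_map (g_otop G) euclideanreal (\<lambda>u. integral\<^sup>L (m i u) f)) \<and>
     (\<forall>K. compactin (g_top G) K \<longrightarrow>
        (\<forall>\<epsilon>>0. eventually (\<lambda>i. \<forall>x\<in>K. inv_defect G (m i) x < \<epsilon>) sequentially)))"

definition groupoid_hom_to :: "('g,'u,'x) tgroupoid_scheme \<Rightarrow> ('g \<Rightarrow> 'q::group_add) \<Rightarrow> bool" where
  "groupoid_hom_to G c \<longleftrightarrow>
     (\<forall>x\<in>g_arr G. \<forall>y\<in>g_arr G. g_s G x = g_r G y \<longrightarrow> c (g_mul G x y) = c x + c y)"

text \<open>G(c) = {(a,x,b). b = a c(x)}; Q is written additively (not necessarily abelian), e = 0.\<close>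
definition skew :: "('g,'u,'x) tgroupoid_scheme \<Rightarrow> ('g \<Rightarrow> 'q::topological_group_add)
                      \<Rightarrow> ('q \<times> 'g \<times> 'q, 'u \<times> 'q) tgroupoid" where
  "skew G c =
    \<lparr> g_arr = {(a,x,b). x \<in> g_arr G \<and> b = a + c x},
      g_obj = g_obj G \<times> UNIV,
      g_r = (\<lambda>(a,x,b). (g_r G x, a)),
      g_s = (\<lambda>(a,x,b). (g_s G x, b)),
      g_mul = (\<lambda>(a,y,b) (b',x,d). (a, g_mul G y x, d)),
      g_inv = (\<lambda>(a,x,b). (b, g_inv G x, a)),
      g_id = (\<lambda>(u,a). (a, g_id G u, a)),
      g_top = subtopology (prod_topology euclidean (prod_topology (g_top G) euclidean))
                {(a,x,b). x \<in> g_arr G \<and> b = a + c x},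
      g_otop = prod_topology (g_otop G) euclidean \<rparr>"

definition restrict_groupoid :: "('g,'u) tgroupoid \<Rightarrow> 'u set \<Rightarrow> ('g,'u) tgroupoid" where
  "restrict_groupoid G Y =
    (let A = {x \<in> g_arr G. g_r G x \<in> Y \<and> g_s G x \<in> Y} in
     G\<lparr> g_arr := A, g_obj := Y, g_top := subtopology (g_top G) A,
        g_otop := subtopology (g_otop G) Y \<rparr>)"

text \<open>c^{-1}(e) as a subgroupoid with the subspace topology (its unit space is G^(0)).\<close>
definition kernel_groupoid :: "('g,'u) tgroupoid \<Rightarrow> ('g \<Rightarrow> 'q::group_add) \<Rightarrow> ('g,'u) tgroupoid" where
  "kernel_groupoid G c =
    (let A = {x \<in> g_arr G. c x = 0} in G\<lparr> g_arr := A, g_top := subtopology (g_top G) A \<rparr>)"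

definition tilde_s :: "('g,'u,'x) tgroupoid_scheme \<Rightarrow> ('g \<Rightarrow> 'q) \<Rightarrow> 'g \<Rightarrow> 'u \<times> 'q" where
  "tilde_s G c x = (g_s G x, c x)"

definition left_borel_action ::
  "('g,'u,'x) tgroupoid_scheme \<Rightarrow> 'z measure \<Rightarrow> ('z \<Rightarrow> 'u) \<Rightarrow> ('g \<Rightarrow> 'z \<Rightarrow> 'z) \<Rightarrow> bool" where
  "left_borel_action G Z \<rho> act \<longleftrightarrow>
     \<rho> \<in> measurable Z (borel_of (g_otop G)) \<and>
     (\<forall>z\<in>space Z. \<forall>x\<in>g_arr G. g_s G x = \<rho> z \<longrightarrow> act x z \<in> space Z \<and> \<rho> (act x z) = g_r G x) \<and>
     (\<forall>z\<in>space Z. act (g_id G (\<rho> z)) z = z) \<and>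
     (\<forall>z\<in>space Z. \<forall>x\<in>g_arr G. \<forall>y\<in>g_arr G. g_s G x = g_r G y \<longrightarrow> g_s G y = \<rho> z \<longrightarrow>
        act (g_mul G x y) z = act x (act y z)) \<and>
     (\<lambda>(x,z). act x z) \<in> measurable
        (restrict_space (borel_of (g_top G) \<Otimes>\<^sub>M Z)
           {(x,z). x \<in> g_arr G \<and> z \<in> space Z \<and> g_s G x = \<rho> z}) Z"

definition right_borel_action ::
  "('g,'u,'x) tgroupoid_scheme \<Rightarrow> 'z measure \<Rightarrow> ('z \<Rightarrow> 'u) \<Rightarrow> ('z \<Rightarrow> 'g \<Rightarrow> 'z) \<Rightarrow> bool" where
  "right_borel_action G Z \<sigma> act \<longleftrightarrow>
     \<sigma> \<in> measurable Z (borel_of (g_otop G)) \<and>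
     (\<forall>z\<in>space Z. \<forall>x\<in>g_arr G. \<sigma> z = g_r G x \<longrightarrow> act z x \<in> space Z \<and> \<sigma> (act z x) = g_s G x) \<and>
     (\<forall>z\<in>space Z. act z (g_id G (\<sigma> z)) = z) \<and>
     (\<forall>z\<in>space Z. \<forall>x\<in>g_arr G. \<forall>y\<in>g_arr G. \<sigma> z = g_r G x \<longrightarrow> g_s G x = g_r G y \<longrightarrow>
        act z (g_mul G x y) = act (act z x) y) \<and>
     (\<lambda>(z,x). act z x) \<in> measurable
        (restrict_space (Z \<Otimes>\<^sub>M borel_of (g_top G))
           {(z,x). x \<in> g_arr G \<and> z \<in> space Z \<and> \<sigma> z = g_r G x}) Z"

definition left_free :: "('g,'u,'x) tgroupoid_scheme \<Rightarrow> 'z measure \<Rightarrow> ('z \<Rightarrow> 'u) \<Rightarrow> ('g \<Rightarrow> 'z \<Rightarrow> 'z) \<Rightarrow> bool" where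
  "left_free G Z \<rho> act \<longleftrightarrow>
     (\<forall>z\<in>space Z. \<forall>x\<in>g_arr G. g_s G x = \<rho> z \<longrightarrow> act x z = z \<longrightarrow> x = g_id G (\<rho> z))"

definition right_free :: "('g,'u,'x) tgroupoid_scheme \<Rightarrow> 'z measure \<Rightarrow> ('z \<Rightarrow> 'u) \<Rightarrow> ('z \<Rightarrow> 'g \<Rightarrow> 'z) \<Rightarrow> bool" where
  "right_free G Z \<sigma> act \<longleftrightarrow>
     (\<forall>z\<in>space Z. \<forall>x\<in>g_arr G. \<sigma> z = g_r G x \<longrightarrow> act z x = z \<longrightarrow> x = g_id G (\<sigma> z))"

text \<open>Proper: a Borel family of probability measures m^z on G, supported on G^{r(z)},
  with x . m^z = m^{x . z} (the translate x . m is the image of m under y |-> x y).\<close>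
definition left_proper :: "('g,'u,'x) tgroupoid_scheme \<Rightarrow> 'z measure \<Rightarrow> ('z \<Rightarrow> 'u) \<Rightarrow> ('g \<Rightarrow> 'z \<Rightarrow> 'z) \<Rightarrow> bool" where
  "left_proper G Z \<rho> act \<longleftrightarrow> (\<exists>m :: 'z \<Rightarrow> 'g measure.
     (\<forall>z\<in>space Z. prob_space (m z) \<and> sets (m z) = sets (borel_of (g_top G)) \<and>
        emeasure (m z) (range_fibre G (\<rho> z)) = 1) \<and>
     (\<forall>A\<in>sets (borel_of (g_top G)). (\<lambda>z. emeasure (m z) A) \<in> borel_measurable Z) \<and>
     (\<forall>z\<in>space Z. \<forall>x\<in>g_arr G. g_s G x = \<rho> z \<longrightarrow> (\<forall>A\<in>sets (borel_of (g_top G)).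
        emeasure (m (act x z)) A = emeasure (m z) {y \<in> range_fibre G (g_s G x). g_mul G x y \<in> A})))"

definition right_proper :: "('g,'u,'x) tgroupoid_scheme \<Rightarrow> 'z measure \<Rightarrow> ('z \<Rightarrow> 'u) \<Rightarrow> ('z \<Rightarrow> 'g \<Rightarrow> 'z) \<Rightarrow> bool" where
  "right_proper G Z \<sigma> act \<longleftrightarrow> (\<exists>m :: 'z \<Rightarrow> 'g measure.
     (\<forall>z\<in>space Z. prob_space (m z) \<and> sets (m z) = sets (borel_of (g_top G)) \<and>
        emeasure (m z) (source_fibre G (\<sigma> z)) = 1) \<and>
     (\<forall>A\<in>sets (borel_of (g_top G)). (\<lambda>z. emeasure (m z) A) \<in> borel_measurable Z) \<and>
     (\<forall>z\<in>space Z. \<forall>x\<in>g_arr G. \<sigma> z = g_r G x \<longrightarrow> (\<forall>A\<in>sets (borel_of (g_top G)).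
        emeasure (m (act z x)) A = emeasure (m z) {y \<in> source_fibre G (g_r G x). g_mul G y x \<in> A})))"

text \<open>The map f : Z -> M, constant exactly on the classes of the orbit relation R, induces a
  Borel isomorphism Z/R = M for the quotient Borel structure on Z/R (a subset of Z/R is Borel
  iff its preimage in Z is Borel).\<close>
definition induces_quotient_borel_iso ::
  "'z measure \<Rightarrow> ('z \<Rightarrow> 'z \<Rightarrow> bool) \<Rightarrow> ('z \<Rightarrow> 'u) \<Rightarrow> 'u measure \<Rightarrow> bool" where
  "induces_quotient_borel_iso Z R f M \<longleftrightarrow>
     (\<forall>z\<in>space Z. \<forall>z'\<in>space Z. f z = f z' \<longleftrightarrow> R z z') \<and>
     f ` space Z = space M \<and>
     f \<in> measurable Z M \<and>
     (\<forall>S\<in>sets Z. (\<forall>z\<in>S. \<forall>z'\<in>space Z. R z z' \<longrightarrow> z' \<in> S) \<longrightarrow> f ` S \<in> sets M)"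

definition borel_equivalence ::
  "('g1,'u1,'x1) tgroupoid_scheme \<Rightarrow> ('g2,'u2,'x2) tgroupoid_scheme \<Rightarrow> 'z measure \<Rightarrow>
   ('z \<Rightarrow> 'u1) \<Rightarrow> ('g1 \<Rightarrow> 'z \<Rightarrow> 'z) \<Rightarrow> ('z \<Rightarrow> 'u2) \<Rightarrow> ('z \<Rightarrow> 'g2 \<Rightarrow> 'z) \<Rightarrow> bool" where
  "borel_equivalence G1 G2 Z \<rho> la \<sigma> ra \<longleftrightarrow>
     left_borel_action G1 Z \<rho> la \<and> left_free G1 Z \<rho> la \<and> left_proper G1 Z \<rho> la \<and>
     right_borel_action G2 Z \<sigma> ra \<and> right_free G2 Z \<sigma> ra \<and> right_proper G2 Z \<sigma> ra \<and>
     (\<forall>z\<in>space Z. \<forall>x\<in>g_arr G1. \<forall>y\<in>g_arr G2. g_s G1 x = \<rho> z \<longrightarrow> \<sigma> z = g_r G2 y \<longrightarrow>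
        \<rho> (ra z y) = \<rho> z \<and> \<sigma> (la x z) = \<sigma> z \<and> ra (la x z) y = la x (ra z y)) \<and>
     induces_quotient_borel_iso Z
        (\<lambda>z z'. \<exists>y\<in>g_arr G2. \<sigma> z = g_r G2 y \<and> z' = ra z y) \<rho> (borel_of (g_otop G1)) \<and>
     induces_quotient_borel_iso Z
        (\<lambda>z z'. \<exists>x\<in>g_arr G1. g_s G1 x = \<rho> z \<and> z' = la x z) \<sigma> (borel_of (g_otop G2))"

definition borel_equivalent ::
  "('g1,'u1,'x1) tgroupoid_scheme \<Rightarrow> ('g2,'u2,'x2) tgroupoid_scheme \<Rightarrow> 'z itself \<Rightarrow> bool" where
  "borel_equivalent G1 G2 _ \<longleftrightarrow>
     (\<exists>(Z :: 'z measure) \<rho> la \<sigma> ra. borel_equivalence G1 G2 Z \<rho> la \<sigma> ra)"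

end

theory Submission
  imports Defs
begin

text \<open>Take \<open>Z = G\<close>. The restricted skew product \<open>G(c)|\<^sub>Y\<close> acts on the left by
  \<open>(a,\<gamma>,b)\<cdot>\<eta> = \<eta>\<gamma>\<inverse>\<close> with moment map \<open>s\<tilde>\<close>, and \<open>c\<inverse>(e)\<close> acts on the right by
  \<open>\<eta>\<cdot>h = h\<inverse>\<eta>\<close> with moment map \<open>r\<close>. The orbits of the right action are the fibres of \<open>s\<tilde>\<close>,
  those of the left action the fibres of \<open>r\<close>, and both actions are free. Properness is witnessed by
  Dirac measures at equivariant Borel maps into the groupoids:
  \<open>\<eta> \<mapsto> (c(\<eta>), \<eta>\<inverse>, e)\<close> for the left action and \<open>\<eta> \<mapsto> \<psi>(s\<tilde>(\<eta>))\<eta>\<inverse>\<close> for the right one,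
  where \<open>\<psi>\<close> is a Borel section of \<open>s\<tilde>\<close> over \<open>Y\<close>. The same section, and the unit map on the
  other side, make the quotient bijections Borel isomorphisms.

  The section exists because \<open>G\<close> is a countable union of compact sets and \<open>s\<tilde>\<close> is continuous into
  a Hausdorff space: in a fibre over a compact set, removing the members of a countable separating
  family of open sets greedily, as long as the fibre stays non-empty, isolates a single point, and
  each step is a Borel condition on the base point.\<close>

section \<open>Borel structures of topological spaces\<close>

lemma space_borel_of [simp]: "space (borel_of X) = topspace X"
  unfolding borel_of_def by (rule space_measure_of) (auto dest: openin_subset)

lemma sets_borel_of: "sets (borel_of X) = sigma_sets (topspace X) {U. openin X U}"
  unfolding borel_of_def by (rule sets_measure_of) (auto dest: openin_subset)

lemma borel_of_openin: "openin X U \<Longrightarrow> U \<in> sets (borel_of X)"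
  unfolding sets_borel_of by auto

lemma borel_of_closedin:
  assumes "closedin X C"
  shows "C \<in> sets (borel_of X)"
proof -
  have "topspace X - C \<in> sets (borel_of X)"
    using assms by (intro borel_of_openin) (simp add: closedin_def)
  then have "space (borel_of X) - (topspace X - C) \<in> sets (borel_of X)"
    by blast
  moreover have "space (borel_of X) - (topspace X - C) = C"
    using assms closedin_subset by auto
  ultimately show ?thesis by simp
qed

lemma measurable_borel_ofI:
  assumes "f \<in> space M \<rightarrow> topspace Y"
    and "\<And>U. openin Y U \<Longrightarrow> f -` U \<inter> space M \<in> sets M"
  shows "f \<in> measurable M (borel_of Y)"
  unfolding borel_of_def
  by (rule measurable_measure_of) (use assms in \<open>auto dest: openin_subset\<close>)

lemma continuous_map_measurable_borel_of:
  assumes "continuous_map X Y f"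
  shows "f \<in> measurable (borel_of X) (borel_of Y)"
proof (rule measurable_borel_ofI)
  show "f \<in> space (borel_of X) \<rightarrow> topspace Y"
    using assms by (auto simp: continuous_map_def)
next
  fix U assume "openin Y U"
  then have "openin X {x \<in> topspace X. f x \<in> U}"
    using assms by (simp add: continuous_map)
  moreover have "f -` U \<inter> space (borel_of X) = {x \<in> topspace X. f x \<in> U}"
    by auto
  ultimately show "f -` U \<inter> space (borel_of X) \<in> sets (borel_of X)"
    by (simp add: borel_of_openin)
qed

lemma measurable_borel_of_subtopologyI:
  assumes "f \<in> measurable M (borel_of X)" "f \<in> space M \<rightarrow> T"
  shows "f \<in> measurable M (borel_of (subtopology X T))"
proof (rule measurable_borel_ofI)
  show "f \<in> space M \<rightarrow> topspace (subtopology X T)"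
    using measurable_space[OF assms(1)] assms(2) by auto
next
  fix U assume "openin (subtopology X T) U"
  then obtain V where V: "openin X V" "U = V \<inter> T"
    by (auto simp: openin_subtopology)
  then have "f -` U \<inter> space M = f -` V \<inter> space M"
    using assms(2) by auto
  then show "f -` U \<inter> space M \<in> sets M"
    using measurable_sets[OF assms(1) borel_of_openin[OF V(1)]] by simp
qed

lemma borel_of_subtopology_subset:
  assumes T: "T \<in> sets (borel_of X)" and A: "A \<in> sets (borel_of (subtopology X T))"
  shows "A \<in> sets (borel_of X)"
proof -
  have "A \<in> sigma_sets (topspace X \<inter> T) {U. openin (subtopology X T) U}"
    using A by (simp add: sets_borel_of)
  then show ?thesis
  proof induction
    case (Basic a)
    then obtain V where "openin X V" "a = V \<inter> T"
      by (auto simp: openin_subtopology)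
    then show ?case using T borel_of_openin by blast
  next
    case (Compl a)
    have "topspace X \<inter> T \<in> sets (borel_of X)"
      using T by (metis space_borel_of sets.Int_space_eq1)
    then show ?case using Compl by blast
  qed (simp, blast)
qed

lemma closedin_continuous_map_fibre:
  assumes "continuous_map X Y f" "Hausdorff_space Y"
  shows "closedin X {p \<in> topspace X. f p = y}"
proof (cases "y \<in> topspace Y")
  case True
  then have "closedin Y {y}"
    using assms(2) by (simp add: Hausdorff_imp_t1_space closedin_t1_singleton)
  from closedin_continuous_map_preimage[OF assms(1) this] show ?thesis by simp
next
  case False
  then have "{p \<in> topspace X. f p = y} = {}"
    using assms(1) by (auto simp: continuous_map_def)
  then show ?thesis by (simp only: closedin_empty)
qed

lemma borel_of_preimage_closedin:
  assumes F: "closedin X F" and h: "continuous_map (subtopology X F) X' h"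
    and A: "A \<in> sets (borel_of X')"
  shows "{y \<in> F. h y \<in> A} \<in> sets (borel_of X)"
proof -
  have "h -` A \<inter> space (borel_of (subtopology X F)) \<in> sets (borel_of (subtopology X F))"
    using measurable_sets[OF continuous_map_measurable_borel_of[OF h] A] .
  moreover have "h -` A \<inter> space (borel_of (subtopology X F)) = {y \<in> F. h y \<in> A}"
    using closedin_subset[OF F] by auto
  ultimately have "{y \<in> F. h y \<in> A} \<in> sets (borel_of (subtopology X F))"
    by simp
  then show ?thesis
    by (rule borel_of_subtopology_subset[OF borel_of_closedin[OF F]])
qed

lemma Hausdorff_space_euclidean_t2: "Hausdorff_space (euclidean :: 'a::t2_space topology)"
  unfolding Hausdorff_space_def disjnt_def using hausdorff by fastforce

lemma second_countable_nat_base: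
  assumes "second_countable X"
  obtains B :: "nat \<Rightarrow> 'a set" where "\<And>n. openin X (B n)"
    and "\<And>U x. openin X U \<Longrightarrow> x \<in> U \<Longrightarrow> \<exists>n. x \<in> B n \<and> B n \<subseteq> U"
proof -
  obtain \<B> where \<B>: "countable \<B>" "\<forall>V\<in>\<B>. openin X V"
    "\<forall>U x. openin X U \<and> x \<in> U \<longrightarrow> (\<exists>V\<in>\<B>. x \<in> V \<and> V \<subseteq> U)"
    using assms unfolding second_countable_def by blast
  \<comment> \<open>Adding \<open>{}\<close> makes the family non-empty, so that \<open>from_nat_into\<close> enumerates it.\<close>
  define B' where "B' = insert {} \<B>"
  have range: "range (from_nat_into B') = B'"
    unfolding B'_def using \<B>(1) by simp
  show ?thesis
  proof
    show "openin X (from_nat_into B' n)" for n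
      using from_nat_into[of B' n] \<B>(2) unfolding B'_def by auto
  next
    fix U x assume "openin X U" "x \<in> U"
    then obtain V where V: "V \<in> \<B>" "x \<in> V" "V \<subseteq> U"
      using \<B>(3) by blast
    then have "V \<in> B'"
      unfolding B'_def by simp
    then have "V \<in> range (from_nat_into B')"
      using range by simp
    then obtain n where "V = from_nat_into B' n" by blast
    then show "\<exists>n. x \<in> from_nat_into B' n \<and> from_nat_into B' n \<subseteq> U"
      using V by blast
  qed
qed

lemma second_countable_compact_cover:
  assumes "second_countable X" "locally_compact_nH X"
  obtains K :: "nat \<Rightarrow> 'a set" where "\<And>n. compactin X (K n)" "topspace X \<subseteq> (\<Union>n. K n)"
proof -
  obtain B :: "nat \<Rightarrow> 'a set" where B: "\<And>U x. openin X U \<Longrightarrow> x \<in> U \<Longrightarrow> \<exists>n. x \<in> B n \<and> B n \<subseteq> U"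
    using second_countable_nat_base[OF assms(1)] by metis
  define K where "K n = (if \<exists>K. compactin X K \<and> B n \<subseteq> K then SOME K. compactin X K \<and> B n \<subseteq> K else {})"
    for n
  have K: "compactin X (K n) \<and> ((\<exists>K. compactin X K \<and> B n \<subseteq> K) \<longrightarrow> B n \<subseteq> K n)" for n
  proof (cases "\<exists>K. compactin X K \<and> B n \<subseteq> K")
    case True
    then show ?thesis unfolding K_def if_P[OF True] using someI_ex[OF True] by blast
  next
    case False
    then show ?thesis unfolding K_def if_not_P[OF False] by blast
  qed
  show ?thesis
  proof
    show "compactin X (K n)" for n using K by blast
  next
    show "topspace X \<subseteq> (\<Union>n. K n)"
    proof
      fix x assume "x \<in> topspace X"
      then obtain V C where "openin X V" "compactin X C" "x \<in> V" "V \<subseteq> C"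
        using assms(2) unfolding locally_compact_nH_def by (meson openin_topspace)
      moreover obtain n where "x \<in> B n" "B n \<subseteq> V"
        using B[OF \<open>openin X V\<close> \<open>x \<in> V\<close>] by blast
      ultimately show "x \<in> (\<Union>n. K n)"
        using K[of n] by blast
    qed
  qed
qed

lemma second_countable_openin_pair_measure:
  assumes "second_countable X" "second_countable Y" "openin (prod_topology X Y) W"
  shows "W \<in> sets (borel_of X \<Otimes>\<^sub>M borel_of Y)"
proof -
  obtain B1 :: "nat \<Rightarrow> 'a set" where B1: "\<And>n. openin X (B1 n)"
    "\<And>U x. openin X U \<Longrightarrow> x \<in> U \<Longrightarrow> \<exists>n. x \<in> B1 n \<and> B1 n \<subseteq> U"
    using second_countable_nat_base[OF assms(1)] by blast
  obtain B2 :: "nat \<Rightarrow> 'b set" where B2: "\<And>n. openin Y (B2 n)"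
    "\<And>U x. openin Y U \<Longrightarrow> x \<in> U \<Longrightarrow> \<exists>n. x \<in> B2 n \<and> B2 n \<subseteq> U"
    using second_countable_nat_base[OF assms(2)] by blast
  define C where "C = (\<lambda>(m, n). B1 m \<times> B2 n) ` {(m, n). B1 m \<times> B2 n \<subseteq> W}"
  have "countable C"
    unfolding C_def by (rule countable_image) simp
  moreover have "C \<subseteq> sets (borel_of X \<Otimes>\<^sub>M borel_of Y)"
    unfolding C_def by (auto simp: pair_measureI borel_of_openin B1(1) B2(1))
  moreover have "\<Union>C = W"
  proof
    show "\<Union>C \<subseteq> W" unfolding C_def by blast
  next
    show "W \<subseteq> \<Union>C"
    proof
      fix p assume "p \<in> W"
      then obtain x y where p: "p = (x, y)" "(x, y) \<in> W" by (cases p) auto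
      then obtain U V where UV: "openin X U" "openin Y V" "x \<in> U" "y \<in> V" "U \<times> V \<subseteq> W"
        using assms(3)[unfolded openin_prod_topology_alt, rule_format, OF p(2)]
        by (elim exE conjE) (rule that)
      obtain m where m: "x \<in> B1 m" "B1 m \<subseteq> U"
        using B1(2)[OF UV(1,3)] by blast
      obtain n where n: "y \<in> B2 n" "B2 n \<subseteq> V"
        using B2(2)[OF UV(2,4)] by blast
      have "B1 m \<times> B2 n \<in> C"
        unfolding C_def using m(2) n(2) UV(5) by (intro image_eqI[of _ _ "(m, n)"]) auto
      then show "p \<in> \<Union>C"
        using p(1) m(1) n(1) by blast
    qed
  qed
  ultimately show ?thesis
    using sets.countable_Union[of C "borel_of X \<Otimes>\<^sub>M borel_of Y"] by simp
qed

lemma continuous_map_measurable_restrict_pair_measure: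
  assumes "second_countable X" "second_countable Y"
    and cont: "continuous_map (subtopology (prod_topology X Y) D) Z f"
  shows "f \<in> measurable (restrict_space (borel_of X \<Otimes>\<^sub>M borel_of Y) D) (borel_of Z)"
proof (rule measurable_borel_ofI)
  show "f \<in> space (restrict_space (borel_of X \<Otimes>\<^sub>M borel_of Y) D) \<rightarrow> topspace Z"
    using continuous_map_image_subset_topspace[OF cont]
    by (auto simp: space_restrict_space space_pair_measure)
next
  fix U assume "openin Z U"
  then have "openin (subtopology (prod_topology X Y) D)
      {p \<in> topspace (subtopology (prod_topology X Y) D). f p \<in> U}"
    using cont by (simp add: continuous_map)
  then obtain W where W: "openin (prod_topology X Y) W"
    "{p \<in> topspace (subtopology (prod_topology X Y) D). f p \<in> U} = W \<inter> D"
    by (auto simp: openin_subtopology)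
  have "f -` U \<inter> space (restrict_space (borel_of X \<Otimes>\<^sub>M borel_of Y) D) = D \<inter> W"
    using W(2) openin_subset[OF W(1)] by (auto simp: space_restrict_space space_pair_measure)
  also have "\<dots> \<in> sets (restrict_space (borel_of X \<Otimes>\<^sub>M borel_of Y) D)"
    unfolding sets_restrict_space
    using second_countable_openin_pair_measure[OF assms(1,2) W(1)] by blast
  finally show "f -` U \<inter> space (restrict_space (borel_of X \<Otimes>\<^sub>M borel_of Y) D)
      \<in> sets (restrict_space (borel_of X \<Otimes>\<^sub>M borel_of Y) D)" .
qed

lemma locally_Hausdorff_separating_openin:
  assumes "locally_Hausdorff X" "p \<in> topspace X" "q \<in> topspace X" "p \<noteq> q"
  obtains V where "openin X V" "p \<in> V" "q \<notin> V"
proof -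
  obtain U where U: "openin X U" "p \<in> U" "Hausdorff_space (subtopology X U)"
    using assms(1,2) unfolding locally_Hausdorff_def by auto
  show ?thesis
  proof (cases "q \<in> U")
    case False
    then show ?thesis using U that by blast
  next
    case True
    have "p \<in> topspace (subtopology X U)" "q \<in> topspace (subtopology X U)"
      using U(2) True assms(2,3) by auto
    then obtain V W where V: "openin (subtopology X U) V" and "openin (subtopology X U) W"
        "p \<in> V" "q \<in> W" "disjnt V W"
      using U(3) assms(4) unfolding Hausdorff_space_def by blast
    moreover have "openin X V"
      using openin_trans_full[OF V U(1)] .
    ultimately show ?thesis
      using that by (auto simp: disjnt_def)
  qed
qed


section \<open>Borel sections of continuous maps\<close>

lemma compactin_Int_decseq_closedin_subset:
  fixes E :: "nat \<Rightarrow> 'a set"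
  assumes K: "compactin X K" and E: "\<And>k. closedin X (E k)"
    and dec: "\<And>k m. k \<le> m \<Longrightarrow> E m \<subseteq> E k"
    and U: "openin X U" and sub: "K \<inter> (\<Inter>k. E k) \<subseteq> U"
  shows "\<exists>k. K \<inter> E k \<subseteq> U"
proof -
  define \<U> where "\<U> = insert U (range (\<lambda>k. topspace X - E k))"
  have "\<forall>V\<in>\<U>. openin X V"
    unfolding \<U>_def using U E by auto
  moreover have "K \<subseteq> \<Union>\<U>"
    using sub compactin_subset_topspace[OF K] unfolding \<U>_def by blast
  ultimately obtain \<F> where F: "finite \<F>" "\<F> \<subseteq> \<U>" "K \<subseteq> \<Union>\<F>"
    using K unfolding compactin_def by meson
  have "\<F> - {U} \<subseteq> (\<lambda>k. topspace X - E k) ` UNIV"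
    using F(2) unfolding \<U>_def by blast
  then obtain I where I: "finite I" "\<F> - {U} = (\<lambda>k. topspace X - E k) ` I"
    using finite_subset_image[OF finite_Diff[OF F(1)]] by metis
  define N where "N = Max (insert 0 I)"
  have N: "k \<in> I \<Longrightarrow> k \<le> N" for k
    unfolding N_def using I(1) by simp
  have "K \<inter> E N \<subseteq> U"
  proof
    fix p assume p: "p \<in> K \<inter> E N"
    then obtain V where V: "V \<in> \<F>" "p \<in> V" using F(3) by blast
    show "p \<in> U"
    proof (cases "V = U")
      case False
      then obtain k where "k \<in> I" "V = topspace X - E k"
        using I(2) V(1) by blast
      then show ?thesis using V p dec[OF N] by blast
    qed (use V in simp)
  qed
  then show ?thesis by blast
qed

text \<open>Greedy selection in the fibre \<open>f\<inverse>(y) \<inter> K\<close>: at step \<open>k\<close> the open set \<open>B k\<close> is removed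
  (its index recorded) whenever the remaining part of the fibre is not exhausted by that.\<close>

fun greedy_removed :: "('a \<Rightarrow> 'b) \<Rightarrow> (nat \<Rightarrow> 'a set) \<Rightarrow> 'a set \<Rightarrow> 'b \<Rightarrow> nat \<Rightarrow> nat set" where
  "greedy_removed f B K y 0 = {}"
| "greedy_removed f B K y (Suc k) =
     (if y \<in> f ` (K - \<Union>(B ` (greedy_removed f B K y k \<union> {k})))
      then greedy_removed f B K y k \<union> {k} else greedy_removed f B K y k)"

definition greedy_candidates :: "('a \<Rightarrow> 'b) \<Rightarrow> (nat \<Rightarrow> 'a set) \<Rightarrow> 'a set \<Rightarrow> 'b \<Rightarrow> nat \<Rightarrow> 'a set"
  where "greedy_candidates f B K y k = {p \<in> K - \<Union>(B ` greedy_removed f B K y k). f p = y}"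

definition greedy_point :: "('a \<Rightarrow> 'b) \<Rightarrow> (nat \<Rightarrow> 'a set) \<Rightarrow> 'a set \<Rightarrow> 'b \<Rightarrow> 'a"
  where "greedy_point f B K y = (THE p. \<forall>k. p \<in> greedy_candidates f B K y k)"

lemma greedy_removed_mono: "k \<le> m \<Longrightarrow> greedy_removed f B K y k \<subseteq> greedy_removed f B K y m"
  by (rule lift_Suc_mono_le[of "greedy_removed f B K y"]) auto

lemma greedy_removed_less: "greedy_removed f B K y k \<subseteq> {..<k}"
  by (induction k) auto

lemma greedy_candidates_nonempty:
  "y \<in> f ` K \<Longrightarrow> greedy_candidates f B K y k \<noteq> {}"
  by (induction k) (auto simp: greedy_candidates_def)

lemma greedy_removed_Suc_eq:
  "greedy_removed f B K y (Suc k) = S \<longleftrightarrow>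
     (if k \<in> S
      then (greedy_removed f B K y k = S - {k} \<and> y \<in> f ` (K - \<Union>(B ` S))) \<or>
           (greedy_removed f B K y k = S \<and> y \<notin> f ` (K - \<Union>(B ` S)))
      else greedy_removed f B K y k = S \<and> y \<notin> f ` (K - \<Union>(B ` (S \<union> {k}))))"
proof -
  have "k \<notin> greedy_removed f B K y k"
    using greedy_removed_less[of f B K y k] by auto
  then show ?thesis
    by (cases "k \<in> S") (auto simp: insert_absorb)
qed

locale greedy_selection =
  fixes X :: "'a topology" and Y :: "'b topology" and f :: "'a \<Rightarrow> 'b"
    and B :: "nat \<Rightarrow> 'a set" and K :: "'a set"
  assumes cont: "continuous_map X Y f" and haus: "Hausdorff_space Y"
    and B_open: "\<And>n. openin X (B n)"
    and B_separating: "\<And>p q. p \<in> topspace X \<Longrightarrow> q \<in> topspace X \<Longrightarrow> p \<noteq> q \<Longrightarrow> \<exists>n. p \<in> B n \<and> q \<notin> B n"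
    and compact: "compactin X K"
begin

lemma K_subset: "K \<subseteq> topspace X"
  using compact by (simp add: compactin_subset_topspace)

lemma greedy_candidates_subset_openin:
  assumes "openin X U" "(\<Inter>k. greedy_candidates f B K y k) \<subseteq> U"
  shows "\<exists>k. greedy_candidates f B K y k \<subseteq> U"
proof -
  define E where "E k = {p \<in> topspace X. f p = y} - \<Union>(B ` greedy_removed f B K y k)" for k
  have cand: "greedy_candidates f B K y k = K \<inter> E k" for k
    unfolding greedy_candidates_def E_def using K_subset by auto
  have E_closed: "closedin X (E k)" for k
    unfolding E_def using closedin_continuous_map_fibre[OF cont haus] B_open
    by (intro closedin_diff closedin_Union) auto
  have E_decreasing: "E m \<subseteq> E k" if "k \<le> m" for k m
    unfolding E_def using greedy_removed_mono[OF that, of f B K y] by blast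
  have "K \<inter> (\<Inter>k. E k) \<subseteq> U"
    using assms(2) unfolding cand by blast
  then have "\<exists>k. K \<inter> E k \<subseteq> U"
    using compactin_Int_decseq_closedin_subset[where E = E, OF compact E_closed E_decreasing assms(1)]
    by simp
  then show ?thesis
    unfolding cand .
qed

lemma greedy_candidates_unique:
  assumes p: "\<forall>k. p \<in> greedy_candidates f B K y k" and q: "\<forall>k. q \<in> greedy_candidates f B K y k"
  shows "p = q"
proof (rule ccontr)
  assume "p \<noteq> q"
  have "p \<in> K" "q \<in> K"
    using p q unfolding greedy_candidates_def by auto
  then obtain n where n: "p \<in> B n" "q \<notin> B n"
    using B_separating K_subset \<open>p \<noteq> q\<close> by blast
  \<comment> \<open>\<open>q\<close> survives the removal of \<open>B n\<close>, so \<open>B n\<close> is removed and \<open>p\<close> cannot survive.\<close>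
  have "q \<in> greedy_candidates f B K y n"
    using q by blast
  then have "q \<in> K - \<Union>(B ` (greedy_removed f B K y n \<union> {n}))" "f q = y"
    using n(2) unfolding greedy_candidates_def by auto
  then have "y \<in> f ` (K - \<Union>(B ` (greedy_removed f B K y n \<union> {n})))"
    by blast
  then have "n \<in> greedy_removed f B K y (Suc n)"
    by simp
  moreover have "p \<in> greedy_candidates f B K y (Suc n)"
    using p by blast
  ultimately show False
    using n(1) unfolding greedy_candidates_def by blast
qed

lemma greedy_point_in_candidates:
  assumes "y \<in> f ` K"
  shows "\<forall>k. greedy_point f B K y \<in> greedy_candidates f B K y k"
proof -
  have "\<exists>p. \<forall>k. p \<in> greedy_candidates f B K y k"
  proof (rule ccontr)
    assume "\<nexists>p. \<forall>k. p \<in> greedy_candidates f B K y k"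
    then have "(\<Inter>k. greedy_candidates f B K y k) \<subseteq> {}"
      by blast
    from greedy_candidates_subset_openin[OF openin_empty this]
    obtain k where "greedy_candidates f B K y k \<subseteq> {}"
      by blast
    with greedy_candidates_nonempty[OF assms] show False
      by blast
  qed
  then have "\<exists>!p. \<forall>k. p \<in> greedy_candidates f B K y k"
    using greedy_candidates_unique by blast
  then show ?thesis
    unfolding greedy_point_def by (rule theI')
qed

lemma greedy_point:
  assumes "y \<in> f ` K"
  shows "greedy_point f B K y \<in> K" "f (greedy_point f B K y) = y"
  using greedy_point_in_candidates[OF assms, rule_format, of 0]
  unfolding greedy_candidates_def by auto

lemma greedy_point_in_openin_iff:
  assumes "y \<in> f ` K" "openin X U"
  shows "greedy_point f B K y \<in> U \<longleftrightarrow> (\<exists>k. greedy_candidates f B K y k \<subseteq> U)"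
proof
  assume "greedy_point f B K y \<in> U"
  moreover have "(\<Inter>k. greedy_candidates f B K y k) \<subseteq> {greedy_point f B K y}"
  proof
    fix p assume "p \<in> (\<Inter>k. greedy_candidates f B K y k)"
    then have "\<forall>k. p \<in> greedy_candidates f B K y k"
      by blast
    from greedy_candidates_unique[OF this greedy_point_in_candidates[OF assms(1)]]
    show "p \<in> {greedy_point f B K y}"
      by simp
  qed
  ultimately have "(\<Inter>k. greedy_candidates f B K y k) \<subseteq> U"
    by blast
  then show "\<exists>k. greedy_candidates f B K y k \<subseteq> U"
    using greedy_candidates_subset_openin[OF assms(2)] by blast
next
  assume "\<exists>k. greedy_candidates f B K y k \<subseteq> U"
  then show "greedy_point f B K y \<in> U"
    using greedy_point_in_candidates[OF assms(1)] by blast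
qed

context
  fixes Y0 assumes Y0: "f ` K \<subseteq> Y0" "Y0 \<subseteq> topspace Y"
begin

abbreviation "M \<equiv> borel_of (subtopology Y Y0)"

lemma space_M: "space M = Y0"
  using Y0 by auto

lemma image_compactin_in_M: "compactin X C \<Longrightarrow> f ` C \<inter> Y0 \<in> sets M"
  using compactin_imp_closedin[OF haus image_compactin[OF _ cont]]
  by (intro borel_of_closedin) (auto simp: closedin_subtopology)

lemma compactin_remainder: "openin X U \<Longrightarrow> compactin X (K - \<Union>(B ` S) - U)"
proof -
  assume "openin X U"
  then have "closedin X (topspace X - (\<Union>(B ` S) \<union> U))"
    using B_open by (intro closedin_diff) auto
  moreover have "K - \<Union>(B ` S) - U = (topspace X - (\<Union>(B ` S) \<union> U)) \<inter> K"
    using K_subset by auto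
  ultimately show ?thesis
    using closed_Int_compactin[OF _ compact] by metis
qed

lemma greedy_removed_eq_in_M: "{y \<in> Y0. greedy_removed f B K y k = S} \<in> sets M"
proof (induction k arbitrary: S)
  case 0
  have "{y \<in> Y0. greedy_removed f B K y 0 = S} = (if S = {} then space M else {})"
    using space_M by auto
  then show ?case
    by (metis sets.top sets.empty_sets)
next
  case (Suc k)
  define T where "T S' = f ` (K - \<Union>(B ` S')) \<inter> Y0" for S'
  have T: "T S' \<in> sets M" for S'
    unfolding T_def using image_compactin_in_M[OF compactin_remainder[OF openin_empty]] by simp
  show ?case
  proof (cases "k \<in> S")
    case True
    then have "{y \<in> Y0. greedy_removed f B K y (Suc k) = S} =
        ({y \<in> Y0. greedy_removed f B K y k = S - {k}} \<inter> T S) \<union>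
        ({y \<in> Y0. greedy_removed f B K y k = S} - T S)"
      unfolding T_def greedy_removed_Suc_eq[where S = S] by auto
    then show ?thesis
      using Suc.IH T by (simp add: sets.Un sets.Int sets.Diff)
  next
    case False
    then have "{y \<in> Y0. greedy_removed f B K y (Suc k) = S} =
        {y \<in> Y0. greedy_removed f B K y k = S} - T (S \<union> {k})"
      unfolding T_def greedy_removed_Suc_eq[where S = S] by auto
    then show ?thesis
      using Suc.IH T by (simp add: sets.Diff)
  qed
qed

lemma greedy_candidates_subset_in_M:
  assumes "openin X U"
  shows "{y \<in> Y0. greedy_candidates f B K y k \<subseteq> U} \<in> sets M"
proof -
  have "{y \<in> Y0. greedy_candidates f B K y k \<subseteq> U} =
     (\<Union>S\<in>Pow {..<k}. {y \<in> Y0. greedy_removed f B K y k = S} \<inter>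
        (space M - f ` (K - \<Union>(B ` S) - U) \<inter> Y0))"
  proof -
    have "greedy_removed f B K y k \<in> Pow {..<k}" for y
      using greedy_removed_less[of f B K y k] by simp
    then show ?thesis
      using space_M unfolding greedy_candidates_def by blast
  qed
  also have "\<dots> \<in> sets M"
  proof (rule sets.finite_UN)
    fix S
    show "{y \<in> Y0. greedy_removed f B K y k = S} \<inter> (space M - f ` (K - \<Union>(B ` S) - U) \<inter> Y0)
        \<in> sets M"
      using sets.compl_sets[OF image_compactin_in_M[OF compactin_remainder[OF assms]]]
      by (rule sets.Int[OF greedy_removed_eq_in_M])
  qed simp
  finally show ?thesis .
qed

lemma greedy_point_in_openin_in_M:
  assumes "openin X U"
  shows "{y \<in> f ` K \<inter> Y0. greedy_point f B K y \<in> U} \<in> sets M"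
proof -
  have "{y \<in> f ` K \<inter> Y0. greedy_point f B K y \<in> U} =
      (f ` K \<inter> Y0) \<inter> (\<Union>k. {y \<in> Y0. greedy_candidates f B K y k \<subseteq> U})"
    using greedy_point_in_openin_iff[OF _ assms] by auto
  also have "\<dots> \<in> sets M"
    using image_compactin_in_M[OF compact] greedy_candidates_subset_in_M[OF assms] by blast
  finally show ?thesis .
qed

end

end

definition greedy_section :: "('a \<Rightarrow> 'b) \<Rightarrow> (nat \<Rightarrow> 'a set) \<Rightarrow> (nat \<Rightarrow> 'a set) \<Rightarrow> 'b \<Rightarrow> 'a" where
  "greedy_section f B Kn y = greedy_point f B (Kn (LEAST n. y \<in> f ` Kn n)) y"

locale greedy_cover_selection =
  fixes X :: "'a topology" and Y :: "'b topology" and f :: "'a \<Rightarrow> 'b"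
    and B :: "nat \<Rightarrow> 'a set" and Kn :: "nat \<Rightarrow> 'a set"
  assumes cont: "continuous_map X Y f" and haus: "Hausdorff_space Y"
    and B_open: "\<And>n. openin X (B n)"
    and B_separating: "\<And>p q. p \<in> topspace X \<Longrightarrow> q \<in> topspace X \<Longrightarrow> p \<noteq> q \<Longrightarrow> \<exists>n. p \<in> B n \<and> q \<notin> B n"
    and compact: "\<And>n. compactin X (Kn n)"
    and cover: "topspace X \<subseteq> (\<Union>n. Kn n)"
begin

lemma greedy_selection: "greedy_selection X Y f B (Kn n)"
  by unfold_locales (use cont haus B_open B_separating compact in auto)

lemma Kn_subset: "Kn n \<subseteq> topspace X"
  using compact by (simp add: compactin_subset_topspace)

lemma image_subset: "f ` topspace X \<subseteq> topspace Y"
  using cont by (auto simp: continuous_map_def)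

lemma in_image_Least:
  assumes "y \<in> f ` topspace X"
  shows "y \<in> f ` Kn (LEAST n. y \<in> f ` Kn n)"
proof -
  obtain n where "y \<in> f ` Kn n"
    using assms cover by blast
  then show ?thesis by (rule LeastI)
qed

lemma greedy_section:
  assumes "y \<in> f ` topspace X"
  shows "greedy_section f B Kn y \<in> topspace X" "f (greedy_section f B Kn y) = y"
proof -
  interpret greedy_selection X Y f B "Kn (LEAST n. y \<in> f ` Kn n)"
    by (rule greedy_selection)
  show "greedy_section f B Kn y \<in> topspace X" "f (greedy_section f B Kn y) = y"
    using greedy_point[OF in_image_Least[OF assms]] K_subset unfolding greedy_section_def by auto
qed

lemma greedy_section_preimage:
  defines "Y0 \<equiv> f ` topspace X"
  shows "greedy_section f B Kn -` U \<inter> Y0 =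
    (\<Union>n. ((f ` Kn n \<inter> Y0) - (\<Union>m\<in>{..<n}. f ` Kn m \<inter> Y0)) \<inter>
         {y \<in> f ` Kn n \<inter> Y0. greedy_point f B (Kn n) y \<in> U})"
    (is "?lhs = (\<Union>n. ?first n \<inter> ?in n)")
proof
  show "?lhs \<subseteq> (\<Union>n. ?first n \<inter> ?in n)"
  proof
    fix y assume y: "y \<in> ?lhs"
    define n where "n = (LEAST n. y \<in> f ` Kn n)"
    have "y \<in> f ` Kn n"
      using in_image_Least y unfolding n_def Y0_def by blast
    moreover have "\<forall>m<n. y \<notin> f ` Kn m"
      unfolding n_def using not_less_Least by blast
    moreover have "y \<in> Y0" "greedy_point f B (Kn n) y \<in> U"
      using y unfolding greedy_section_def n_def by auto
    ultimately show "y \<in> (\<Union>n. ?first n \<inter> ?in n)"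
      by (intro UN_I[of n]) auto
  qed
next
  show "(\<Union>n. ?first n \<inter> ?in n) \<subseteq> ?lhs"
  proof
    fix y assume "y \<in> (\<Union>n. ?first n \<inter> ?in n)"
    then obtain n where n: "y \<in> f ` Kn n" "y \<in> Y0" "\<forall>m<n. y \<notin> f ` Kn m"
        "greedy_point f B (Kn n) y \<in> U"
      by blast
    have "(LEAST n. y \<in> f ` Kn n) = n"
      by (rule Least_equality) (use n in \<open>auto simp: not_less[symmetric]\<close>)
    then show "y \<in> ?lhs"
      using n unfolding greedy_section_def by simp
  qed
qed

lemma greedy_section_measurable:
  "greedy_section f B Kn \<in> measurable (borel_of (subtopology Y (f ` topspace X))) (borel_of X)"
proof (rule measurable_borel_ofI)
  define Y0 where "Y0 = f ` topspace X"
  let ?M = "borel_of (subtopology Y Y0)"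
  have space: "space ?M = Y0"
    using image_subset unfolding Y0_def by auto
  show "greedy_section f B Kn \<in> space (borel_of (subtopology Y (f ` topspace X))) \<rightarrow> topspace X"
    using space greedy_section unfolding Y0_def by auto
  fix U assume U: "openin X U"
  have Kn_Y0: "f ` Kn n \<subseteq> Y0" "Y0 \<subseteq> topspace Y" for n
    using Kn_subset image_subset unfolding Y0_def by auto
  have image_in_M: "f ` Kn n \<inter> Y0 \<in> sets ?M" for n
  proof -
    interpret greedy_selection X Y f B "Kn n"
      by (rule greedy_selection)
    show ?thesis
      using image_compactin_in_M[OF Kn_Y0 compact] .
  qed
  have point_in_M: "{y \<in> f ` Kn n \<inter> Y0. greedy_point f B (Kn n) y \<in> U} \<in> sets ?M" for n
  proof -
    interpret greedy_selection X Y f B "Kn n"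
      by (rule greedy_selection)
    show ?thesis
      using greedy_point_in_openin_in_M[OF Kn_Y0 U] .
  qed
  have "(\<Union>m\<in>{..<n}. f ` Kn m \<inter> Y0) \<in> sets ?M" for n
    by (rule sets.finite_UN) (use image_in_M in auto)
  then have "((f ` Kn n \<inter> Y0) - (\<Union>m\<in>{..<n}. f ` Kn m \<inter> Y0)) \<inter>
      {y \<in> f ` Kn n \<inter> Y0. greedy_point f B (Kn n) y \<in> U} \<in> sets ?M" for n
    by (rule sets.Int[OF sets.Diff[OF image_in_M] point_in_M])
  then have "greedy_section f B Kn -` U \<inter> Y0 \<in> sets ?M"
    unfolding greedy_section_preimage[folded Y0_def] by (intro sets.countable_UN) blast
  then show "greedy_section f B Kn -` U \<inter> space (borel_of (subtopology Y (f ` topspace X)))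
      \<in> sets (borel_of (subtopology Y (f ` topspace X)))"
    using space unfolding Y0_def by simp
qed
end

theorem continuous_map_borel_section:
  assumes "continuous_map X Y f" "Hausdorff_space Y"
    and "second_countable X" "locally_Hausdorff X" "locally_compact_nH X"
  obtains \<psi> where "\<And>y. y \<in> f ` topspace X \<Longrightarrow> \<psi> y \<in> topspace X \<and> f (\<psi> y) = y"
    and "\<psi> \<in> measurable (borel_of (subtopology Y (f ` topspace X))) (borel_of X)"
proof -
  obtain B :: "nat \<Rightarrow> 'a set" where B: "\<And>n. openin X (B n)"
    "\<And>U x. openin X U \<Longrightarrow> x \<in> U \<Longrightarrow> \<exists>n. x \<in> B n \<and> B n \<subseteq> U"
    using second_countable_nat_base[OF assms(3)] by blast
  obtain Kn :: "nat \<Rightarrow> 'a set" where Kn: "\<And>n. compactin X (Kn n)" "topspace X \<subseteq> (\<Union>n. Kn n)"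
    using second_countable_compact_cover[OF assms(3,5)] by blast
  have "\<exists>n. p \<in> B n \<and> q \<notin> B n"
    if pq: "p \<in> topspace X" "q \<in> topspace X" "p \<noteq> q" for p q
  proof -
    obtain V where "openin X V" "p \<in> V" "q \<notin> V"
      using locally_Hausdorff_separating_openin[OF assms(4) pq] .
    then show ?thesis
      using B(2) by blast
  qed
  then interpret greedy_cover_selection X Y f B Kn
    by unfold_locales (use assms(1,2) B(1) Kn in auto)
  show ?thesis
    by (rule that) (use greedy_section greedy_section_measurable in auto)
qed

locale groupoid_laws =
  fixes G :: "('g,'u,'x) tgroupoid_scheme"
  assumes is_groupoid: "groupoid G"
begin

abbreviation "arr \<equiv> g_arr G"
abbreviation "obj \<equiv> g_obj G"
abbreviation "rr \<equiv> g_r G"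
abbreviation "ss \<equiv> g_s G"
abbreviation "mm \<equiv> g_mul G"
abbreviation "iv \<equiv> g_inv G"
abbreviation "ii \<equiv> g_id G"

lemma r_obj: "x \<in> arr \<Longrightarrow> rr x \<in> obj" and s_obj: "x \<in> arr \<Longrightarrow> ss x \<in> obj"
  using is_groupoid unfolding groupoid_def by auto

lemma id_arr: "u \<in> obj \<Longrightarrow> ii u \<in> arr" and r_id: "u \<in> obj \<Longrightarrow> rr (ii u) = u"
  and s_id: "u \<in> obj \<Longrightarrow> ss (ii u) = u"
  using is_groupoid unfolding groupoid_def by auto

lemma mul_arr: "x \<in> arr \<Longrightarrow> y \<in> arr \<Longrightarrow> ss x = rr y \<Longrightarrow> mm x y \<in> arr"
  and r_mul: "x \<in> arr \<Longrightarrow> y \<in> arr \<Longrightarrow> ss x = rr y \<Longrightarrow> rr (mm x y) = rr x"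
  and s_mul: "x \<in> arr \<Longrightarrow> y \<in> arr \<Longrightarrow> ss x = rr y \<Longrightarrow> ss (mm x y) = ss y"
  using is_groupoid unfolding groupoid_def by auto

lemma assoc: "x \<in> arr \<Longrightarrow> y \<in> arr \<Longrightarrow> z \<in> arr \<Longrightarrow> ss x = rr y \<Longrightarrow> ss y = rr z \<Longrightarrow>
    mm (mm x y) z = mm x (mm y z)"
  using is_groupoid unfolding groupoid_def by blast

lemma id_left: "x \<in> arr \<Longrightarrow> mm (ii (rr x)) x = x" and id_right: "x \<in> arr \<Longrightarrow> mm x (ii (ss x)) = x"
  using is_groupoid unfolding groupoid_def by auto

lemma inv_arr: "x \<in> arr \<Longrightarrow> iv x \<in> arr" and r_inv: "x \<in> arr \<Longrightarrow> rr (iv x) = ss x"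
  and s_inv: "x \<in> arr \<Longrightarrow> ss (iv x) = rr x"
  and inv_left: "x \<in> arr \<Longrightarrow> mm (iv x) x = ii (ss x)"
  and inv_right: "x \<in> arr \<Longrightarrow> mm x (iv x) = ii (rr x)"
  using is_groupoid unfolding groupoid_def by auto

lemma cancel_left:
  assumes x: "x \<in> arr" and y: "y \<in> arr" and z: "z \<in> arr" and xy: "ss x = rr y" and xz: "ss x = rr z"
    and e: "mm x y = mm x z"
  shows "y = z"
proof -
  have il: "mm (iv x) x = ii (ss x)" using x by (rule inv_left)
  have si: "ss (iv x) = rr x" using x by (rule s_inv)
  have "y = mm (ii (rr y)) y" using id_left[OF y] by simp
  also have "\<dots> = mm (mm (iv x) x) y" using il xy by simp
  also have "\<dots> = mm (iv x) (mm x y)" using assoc[OF inv_arr[OF x] x y si xy] .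
  also have "\<dots> = mm (iv x) (mm x z)" using e by simp
  also have "\<dots> = mm (mm (iv x) x) z" using assoc[OF inv_arr[OF x] x z si xz] by simp
  also have "\<dots> = mm (ii (rr z)) z" using il xz by simp
  also have "\<dots> = z" using id_left[OF z] .
  finally show ?thesis .
qed

lemma cancel_right:
  assumes x: "x \<in> arr" and y: "y \<in> arr" and z: "z \<in> arr" and yx: "ss y = rr x" and zx: "ss z = rr x"
    and e: "mm y x = mm z x"
  shows "y = z"
proof -
  have ir: "mm x (iv x) = ii (rr x)" using x by (rule inv_right)
  have ri: "rr (iv x) = ss x" using x by (rule r_inv)
  have "y = mm y (ii (ss y))" using id_right[OF y] by simp
  also have "\<dots> = mm y (mm x (iv x))" using ir yx by simp
  also have "\<dots> = mm (mm y x) (iv x)" using assoc[OF y x inv_arr[OF x] yx ri[symmetric]] by simp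
  also have "\<dots> = mm (mm z x) (iv x)" using e by simp
  also have "\<dots> = mm z (mm x (iv x))" using assoc[OF z x inv_arr[OF x] zx ri[symmetric]] .
  also have "\<dots> = mm z (ii (ss z))" using ir zx by simp
  also have "\<dots> = z" using id_right[OF z] .
  finally show ?thesis .
qed

lemma inv_mul:
  assumes x: "x \<in> arr" and y: "y \<in> arr" and xy: "ss x = rr y"
  shows "iv (mm x y) = mm (iv y) (iv x)"
proof -
  have xya: "mm x y \<in> arr" using mul_arr[OF x y xy] .
  have ix: "iv x \<in> arr" and iy: "iv y \<in> arr" using x y by (auto simp: inv_arr)
  have c1: "ss (iv y) = rr (iv x)" using x y xy by (simp add: s_inv r_inv)
  have yixa: "mm (iv y) (iv x) \<in> arr" using mul_arr[OF iy ix c1] .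
  show ?thesis
  proof (rule cancel_left[OF xya inv_arr[OF xya] yixa])
    show "ss (mm x y) = rr (iv (mm x y))" using xya by (simp add: r_inv)
    show "ss (mm x y) = rr (mm (iv y) (iv x))" using s_mul[OF x y xy] r_mul[OF iy ix c1] r_inv[OF y] by simp
    have "mm (mm x y) (mm (iv y) (iv x)) = mm x (mm y (mm (iv y) (iv x)))"
      using assoc[OF x y yixa xy] r_mul[OF iy ix c1] r_inv[OF y] by simp
    also have "mm y (mm (iv y) (iv x)) = mm (mm y (iv y)) (iv x)"
      using assoc[OF y iy ix _ c1] r_inv[OF y] by simp
    also have "\<dots> = mm (ii (rr y)) (iv x)" using inv_right[OF y] by simp
    also have "\<dots> = iv x" using id_left[OF ix] r_inv[OF x] xy by simp
    also have "mm x (iv x) = ii (rr x)" using inv_right[OF x] .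
    also have "\<dots> = ii (rr (mm x y))" using r_mul[OF x y xy] by simp
    also have "\<dots> = mm (mm x y) (iv (mm x y))" using inv_right[OF xya] by simp
    finally show "mm (mm x y) (iv (mm x y)) = mm (mm x y) (mm (iv y) (iv x))" by simp
  qed
qed

lemma inv_id: assumes u: "u \<in> obj" shows "iv (ii u) = ii u"
proof -
  have a: "ii u \<in> arr" using id_arr[OF u] .
  show ?thesis
  proof (rule cancel_left[OF a inv_arr[OF a] a])
    show "ss (ii u) = rr (iv (ii u))" using r_inv[OF a] by simp
    show "ss (ii u) = rr (ii u)" using r_id[OF u] s_id[OF u] by simp
    have "mm (ii u) (ii u) = ii u" using id_left[OF a] r_id[OF u] by simp
    moreover have "mm (ii u) (iv (ii u)) = ii u" using inv_right[OF a] r_id[OF u] by simp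
    ultimately show "mm (ii u) (iv (ii u)) = mm (ii u) (ii u)" by simp
  qed
qed

lemma inv_inv: assumes x: "x \<in> arr" shows "iv (iv x) = x"
proof -
  have ix: "iv x \<in> arr" using inv_arr[OF x] .
  show ?thesis
  proof (rule cancel_left[OF ix inv_arr[OF ix] x])
    show "ss (iv x) = rr (iv (iv x))" using r_inv[OF ix] by simp
    show "ss (iv x) = rr x" using s_inv[OF x] .
    show "mm (iv x) (iv (iv x)) = mm (iv x) x"
      using inv_right[OF ix] inv_left[OF x] r_inv[OF x] by simp
  qed
qed

lemma mul_eq_self_left:
  assumes x: "x \<in> arr" and y: "y \<in> arr" and xy: "ss x = rr y" and e: "mm x y = y" shows "x = ii (rr y)"
proof (rule cancel_right[OF y x id_arr[OF r_obj[OF y]] xy])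
  show "ss (ii (rr y)) = rr y" using s_id[OF r_obj[OF y]] .
  show "mm x y = mm (ii (rr y)) y" using e id_left[OF y] by simp
qed

lemma mul_eq_self_right:
  assumes x: "x \<in> arr" and y: "y \<in> arr" and yx: "ss y = rr x" and e: "mm y x = y" shows "x = ii (ss y)"
proof (rule cancel_left[OF y x id_arr[OF s_obj[OF y]] yx])
  show "ss y = rr (ii (ss y))" using r_id[OF s_obj[OF y]] by simp
  show "mm y x = mm y (ii (ss y))" using e id_right[OF y] by simp
qed

lemma hom_id:
  fixes c :: "'g \<Rightarrow> 'q::group_add"
  assumes "groupoid_hom_to G c" "u \<in> obj" shows "c (ii u) = 0"
proof -
  have "c (mm (ii u) (ii u)) = c (ii u) + c (ii u)"
    using assms unfolding groupoid_hom_to_def by (simp add: id_arr r_id s_id)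
  moreover have "mm (ii u) (ii u) = ii u" using id_left[OF id_arr[OF assms(2)]] assms(2) by (simp add: r_id)
  ultimately have e: "c (ii u) = c (ii u) + c (ii u)" by simp
  then show ?thesis by (metis add_left_cancel add.right_neutral)
qed

lemma hom_inv:
  fixes c :: "'g \<Rightarrow> 'q::group_add"
  assumes "groupoid_hom_to G c" "x \<in> arr" shows "c (iv x) = - c x"
proof -
  have "c (mm x (iv x)) = c x + c (iv x)"
    using assms unfolding groupoid_hom_to_def by (simp add: inv_arr r_inv)
  moreover have "c (mm x (iv x)) = 0" using assms by (simp add: inv_right hom_id r_obj)
  ultimately have "c x + c (iv x) = 0" by simp
  from add.inverse_unique[OF this] show ?thesis by simp
qed

lemma hom_mul:
  fixes c :: "'g \<Rightarrow> 'q::group_add"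
  assumes "groupoid_hom_to G c" "x \<in> arr" "y \<in> arr" "ss x = rr y" shows "c (mm x y) = c x + c y"
  using assms unfolding groupoid_hom_to_def by blast

end
section \<open>Proper actions and quotients from Borel maps\<close>

text \<open>Dirac measures at an equivariant Borel map into the groupoid witness properness.\<close>

lemma left_proper_of_equivariant_map:
  assumes g: "g \<in> measurable Z (borel_of (g_top G))"
    and g_fibre: "\<And>z. z \<in> space Z \<Longrightarrow> g z \<in> range_fibre G (\<rho> z)"
    and fibre_borel: "\<And>u. range_fibre G u \<in> sets (borel_of (g_top G))"
    and translate_borel: "\<And>x A. x \<in> g_arr G \<Longrightarrow> A \<in> sets (borel_of (g_top G)) \<Longrightarrow>
       {y \<in> range_fibre G (g_s G x). g_mul G x y \<in> A} \<in> sets (borel_of (g_top G))"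
    and equivariant: "\<And>z x. z \<in> space Z \<Longrightarrow> x \<in> g_arr G \<Longrightarrow> g_s G x = \<rho> z \<Longrightarrow>
       g (act x z) = g_mul G x (g z)"
  shows "left_proper G Z \<rho> act"
  unfolding left_proper_def
proof (intro exI[of _ "\<lambda>z. return (borel_of (g_top G)) (g z)"] conjI ballI impI)
  fix z assume z: "z \<in> space Z"
  then show "prob_space (return (borel_of (g_top G)) (g z))"
    using measurable_space[OF g z] by (simp add: prob_space_return)
  show "sets (return (borel_of (g_top G)) (g z)) = sets (borel_of (g_top G))"
    by simp
  show "emeasure (return (borel_of (g_top G)) (g z)) (range_fibre G (\<rho> z)) = 1"
    using fibre_borel g_fibre[OF z] by simp
next
  fix A assume A: "A \<in> sets (borel_of (g_top G))"
  have "(\<lambda>z. indicator A (g z) :: ennreal) \<in> borel_measurable Z"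
    by (rule measurable_compose[OF g borel_measurable_indicator[OF A]])
  then show "(\<lambda>z. emeasure (return (borel_of (g_top G)) (g z)) A) \<in> borel_measurable Z"
    using A by simp
next
  fix z x A assume z: "z \<in> space Z" and x: "x \<in> g_arr G" and sx: "g_s G x = \<rho> z"
    and A: "A \<in> sets (borel_of (g_top G))"
  have "indicator A (g (act x z)) =
      (indicator {y \<in> range_fibre G (g_s G x). g_mul G x y \<in> A} (g z) :: ennreal)"
    using equivariant[OF z x sx] g_fibre[OF z] sx by (simp add: indicator_def)
  then show "emeasure (return (borel_of (g_top G)) (g (act x z))) A =
      emeasure (return (borel_of (g_top G)) (g z)) {y \<in> range_fibre G (g_s G x). g_mul G x y \<in> A}"
    using A translate_borel[OF x A] by simp
qed

lemma right_proper_of_equivariant_map: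
  assumes g: "g \<in> measurable Z (borel_of (g_top G))"
    and g_fibre: "\<And>z. z \<in> space Z \<Longrightarrow> g z \<in> source_fibre G (\<sigma> z)"
    and fibre_borel: "\<And>u. source_fibre G u \<in> sets (borel_of (g_top G))"
    and translate_borel: "\<And>x A. x \<in> g_arr G \<Longrightarrow> A \<in> sets (borel_of (g_top G)) \<Longrightarrow>
       {y \<in> source_fibre G (g_r G x). g_mul G y x \<in> A} \<in> sets (borel_of (g_top G))"
    and equivariant: "\<And>z x. z \<in> space Z \<Longrightarrow> x \<in> g_arr G \<Longrightarrow> \<sigma> z = g_r G x \<Longrightarrow>
       g (act z x) = g_mul G (g z) x"
  shows "right_proper G Z \<sigma> act"
  unfolding right_proper_def
proof (intro exI[of _ "\<lambda>z. return (borel_of (g_top G)) (g z)"] conjI ballI impI)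
  fix z assume z: "z \<in> space Z"
  then show "prob_space (return (borel_of (g_top G)) (g z))"
    using measurable_space[OF g z] by (simp add: prob_space_return)
  show "sets (return (borel_of (g_top G)) (g z)) = sets (borel_of (g_top G))"
    by simp
  show "emeasure (return (borel_of (g_top G)) (g z)) (source_fibre G (\<sigma> z)) = 1"
    using fibre_borel g_fibre[OF z] by simp
next
  fix A assume A: "A \<in> sets (borel_of (g_top G))"
  have "(\<lambda>z. indicator A (g z) :: ennreal) \<in> borel_measurable Z"
    by (rule measurable_compose[OF g borel_measurable_indicator[OF A]])
  then show "(\<lambda>z. emeasure (return (borel_of (g_top G)) (g z)) A) \<in> borel_measurable Z"
    using A by simp
next
  fix z x A assume z: "z \<in> space Z" and x: "x \<in> g_arr G" and zx: "\<sigma> z = g_r G x"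
    and A: "A \<in> sets (borel_of (g_top G))"
  have "indicator A (g (act z x)) =
      (indicator {y \<in> source_fibre G (g_r G x). g_mul G y x \<in> A} (g z) :: ennreal)"
    using equivariant[OF z x zx] g_fibre[OF z] zx by (simp add: indicator_def)
  then show "emeasure (return (borel_of (g_top G)) (g (act z x))) A =
      emeasure (return (borel_of (g_top G)) (g z)) {y \<in> source_fibre G (g_r G x). g_mul G y x \<in> A}"
    using A translate_borel[OF x A] by simp
qed

lemma induces_quotient_borel_iso_of_section:
  assumes classes: "\<And>z z'. z \<in> space Z \<Longrightarrow> z' \<in> space Z \<Longrightarrow> f z = f z' \<longleftrightarrow> R z z'"
    and f: "f \<in> measurable Z M"
    and right_inverse: "\<psi> \<in> measurable M Z" "\<And>y. y \<in> space M \<Longrightarrow> f (\<psi> y) = y"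
  shows "induces_quotient_borel_iso Z R f M"
  unfolding induces_quotient_borel_iso_def
proof (intro conjI ballI impI)
  show "f ` space Z = space M"
    using measurable_space[OF f] measurable_space[OF right_inverse(1)] right_inverse(2) by force
next
  fix S assume S: "S \<in> sets Z" and saturated: "\<forall>z\<in>S. \<forall>z'\<in>space Z. R z z' \<longrightarrow> z' \<in> S"
  have S_space: "S \<subseteq> space Z"
    using sets.sets_into_space[OF S] .
  \<comment> \<open>A saturated set contains the section point of each of its classes.\<close>
  have "f ` S = \<psi> -` S \<inter> space M"
  proof
    show "f ` S \<subseteq> \<psi> -` S \<inter> space M"
    proof
      fix y assume "y \<in> f ` S"
      then obtain z where z: "z \<in> S" "y = f z" by blast
      then have y: "y \<in> space M"
        using measurable_space[OF f] S_space by blast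
      then have "\<psi> y \<in> space Z" "f z = f (\<psi> y)"
        using measurable_space[OF right_inverse(1)] right_inverse(2) z(2) by auto
      then have "\<psi> y \<in> S"
        using saturated z(1) classes[of z "\<psi> y"] S_space by blast
      then show "y \<in> \<psi> -` S \<inter> space M"
        using y by blast
    qed
  next
    show "\<psi> -` S \<inter> space M \<subseteq> f ` S"
      using right_inverse(2) by (metis (no_types, lifting) IntE image_eqI vimageE subsetI)
  qed
  then show "f ` S \<in> sets M"
    using measurable_sets[OF right_inverse(1) S] by simp
qed (use classes f in auto)

text \<open>The equivalence space must live on \<open>'g \<times> 'g\<close>; \<open>G\<close> is embedded as the diagonal.\<close>

definition diag :: "'a \<Rightarrow> 'a \<times> 'a" where "diag x = (x, x)"

lemma inj_diag: "inj diag"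
  unfolding diag_def by (auto intro: injI)

lemma fst_diag [simp]: "fst (diag x) = x"
  and diag_eq_iff [simp]: "diag x = diag y \<longleftrightarrow> x = y"
  unfolding diag_def by auto

section \<open>The equivalence between the restricted skew product and the kernel\<close>

locale skew_product_setting = groupoid_laws G for G :: "('g,'u) tgroupoid" +
  fixes c :: "'g \<Rightarrow> 'q::{topological_group_add, t2_space}"
  assumes lc: "lc_groupoid G" and sc: "second_countable (g_top G)"
    and lh: "locally_Hausdorff (g_top G)"
    and cc: "continuous_map (g_top G) euclidean c"
    and hom: "groupoid_hom_to G c"
begin

abbreviation "TG \<equiv> g_top G"
abbreviation "TO \<equiv> g_otop G"
abbreviation "PT \<equiv> prod_topology TO (euclidean :: 'q topology)"
abbreviation "QT \<equiv> prod_topology (euclidean :: 'q topology) (prod_topology TG (euclidean :: 'q topology))"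
abbreviation "st \<equiv> tilde_s G c"
abbreviation "Y \<equiv> st ` arr"

lemma topological_G: "topological_groupoid G"
  using lc unfolding lc_groupoid_def by simp

lemma topspace_TG: "topspace TG = arr" and topspace_TO: "topspace TO = obj"
  using topological_G unfolding topological_groupoid_def by auto

lemma cont_r: "continuous_map TG TO rr" and cont_s: "continuous_map TG TO ss"
  and cont_inv: "continuous_map TG TG iv"
  and cont_mul: "continuous_map (subtopology (prod_topology TG TG) (composable G)) TG (\<lambda>(x,y). mm x y)"
  and homeo_id: "homeomorphic_map TO (subtopology TG (ii ` obj)) ii"
  using topological_G unfolding topological_groupoid_def by auto

lemma cont_id: "continuous_map TO TG ii"
  using homeomorphic_imp_continuous_map[OF homeo_id] continuous_map_into_fulltopology by blast

lemma Hausdorff_TO: "Hausdorff_space TO"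
  using lc unfolding lc_groupoid_def by simp

lemma Hausdorff_PT: "Hausdorff_space PT"
  unfolding Hausdorff_space_prod_topology using Hausdorff_TO Hausdorff_space_euclidean_t2 by blast

lemma cont_st: "continuous_map TG PT st"
  unfolding tilde_s_def using cont_s cc by (intro continuous_map_pairedI) auto

lemma st_eq: "st x = (ss x, c x)"
  by (simp add: tilde_s_def)

lemma Y_mem: "(u,q) \<in> Y \<longleftrightarrow> (\<exists>x\<in>arr. ss x = u \<and> c x = q)"
  by (auto simp: tilde_s_def)

lemma c_mul: "x \<in> arr \<Longrightarrow> y \<in> arr \<Longrightarrow> ss x = rr y \<Longrightarrow> c (mm x y) = c x + c y"
  by (rule hom_mul[OF hom])

lemma c_inv: "x \<in> arr \<Longrightarrow> c (iv x) = - c x"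
  by (rule hom_inv[OF hom])

lemma c_id: "u \<in> obj \<Longrightarrow> c (ii u) = 0"
  by (rule hom_id[OF hom])

lemma measurable_inv: "iv \<in> measurable (borel_of TG) (borel_of TG)"
  by (rule continuous_map_measurable_borel_of[OF cont_inv])

lemma measurable_mul_comp:
  assumes f: "f \<in> measurable M (borel_of TG)" and g: "g \<in> measurable M (borel_of TG)"
    and comp: "\<And>x. x \<in> space M \<Longrightarrow> ss (f x) = rr (g x)"
  shows "(\<lambda>x. mm (f x) (g x)) \<in> measurable M (borel_of TG)"
proof -
  have "(\<lambda>x. (f x, g x)) \<in> measurable M (restrict_space (borel_of TG \<Otimes>\<^sub>M borel_of TG) (composable G))"
  proof (rule measurable_restrict_space2)
    show "(\<lambda>x. (f x, g x)) \<in> space M \<rightarrow> composable G"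
      using measurable_space[OF f] measurable_space[OF g] comp topspace_TG
      by (auto simp: composable_def)
    show "(\<lambda>x. (f x, g x)) \<in> measurable M (borel_of TG \<Otimes>\<^sub>M borel_of TG)"
      by (rule measurable_Pair[OF f g])
  qed
  from measurable_compose[OF this continuous_map_measurable_restrict_pair_measure[OF sc sc cont_mul]]
  show ?thesis by simp
qed

definition "GY = restrict_groupoid (skew G c) Y"
definition "Ker = kernel_groupoid G c"
definition "Z = embed_measure (borel_of TG) diag"

lemma GY_arr: "g_arr GY = {(a,x,b). x \<in> arr \<and> b = a + c x \<and> (rr x, a) \<in> Y \<and> (ss x, b) \<in> Y}"
  unfolding GY_def restrict_groupoid_def skew_def Let_def by auto

lemma GY_mem: "(a,x,b) \<in> g_arr GY \<longleftrightarrow> x \<in> arr \<and> b = a + c x \<and> (rr x, a) \<in> Y \<and> (ss x, b) \<in> Y"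
  unfolding GY_arr by simp

lemma GY_E:
  assumes "x \<in> g_arr GY"
  obtains a \<gamma> b where "x = (a,\<gamma>,b)" "\<gamma> \<in> arr" "b = a + c \<gamma>" "(rr \<gamma>, a) \<in> Y" "(ss \<gamma>, b) \<in> Y"
  using assms unfolding GY_arr by auto

lemma GY_r [simp]: "g_r GY (a,x,b) = (rr x, a)" and GY_s [simp]: "g_s GY (a,x,b) = (ss x, b)"
  and GY_mul [simp]: "g_mul GY (a,x,b) (b',y,d) = (a, mm x y, d)"
  and GY_id [simp]: "g_id GY (u,q) = (q, ii u, q)"
  and GY_otop: "g_otop GY = subtopology PT Y"
  unfolding GY_def restrict_groupoid_def skew_def Let_def by auto

lemma GY_top: "g_top GY = subtopology QT (g_arr GY)"
  unfolding GY_def restrict_groupoid_def skew_def Let_def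
  by (simp add: subtopology_subtopology, intro arg_cong[where f="subtopology _"]) auto

lemma GY_topspace: "topspace (g_top GY) = g_arr GY"
  unfolding GY_top using topspace_TG by (auto simp: GY_arr)

lemma cont_proj_GY: "continuous_map (g_top GY) TG (\<lambda>x. fst (snd x))"
  unfolding GY_top
  by (intro continuous_map_from_subtopology
      continuous_map_compose[OF continuous_map_snd continuous_map_fst, unfolded o_def])

lemma cont_snd_snd_GY: "continuous_map (g_top GY) euclidean (\<lambda>x. snd (snd x))"
  unfolding GY_top
  by (intro continuous_map_from_subtopology
      continuous_map_compose[OF continuous_map_snd continuous_map_snd, unfolded o_def])

lemma space_borel_of_GY_otop: "space (borel_of (g_otop GY)) = Y"
  unfolding GY_otop unfolding tilde_s_def using s_obj topspace_TO by auto

lemma GY_mul_closed: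
  assumes x: "x \<in> g_arr GY" and y: "y \<in> g_arr GY" and xy: "g_s GY x = g_r GY y"
  shows "g_mul GY x y \<in> g_arr GY"
proof -
  obtain a \<gamma> b where xx: "x = (a,\<gamma>,b)" "\<gamma> \<in> arr" "b = a + c \<gamma>" "(rr \<gamma>, a) \<in> Y"
    using x by (rule GY_E)
  obtain a' \<gamma>' b' where yy: "y = (a',\<gamma>',b')" "\<gamma>' \<in> arr" "b' = a' + c \<gamma>'" "(ss \<gamma>', b') \<in> Y"
    using y by (rule GY_E)
  have e: "ss \<gamma> = rr \<gamma>'" "a' = b"
    using xy xx yy by auto
  have "mm \<gamma> \<gamma>' \<in> arr" "rr (mm \<gamma> \<gamma>') = rr \<gamma>" "ss (mm \<gamma> \<gamma>') = ss \<gamma>'" "c (mm \<gamma> \<gamma>') = c \<gamma> + c \<gamma>'"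
    using mul_arr[OF xx(2) yy(2) e(1)] r_mul[OF xx(2) yy(2) e(1)]
      s_mul[OF xx(2) yy(2) e(1)] c_mul[OF xx(2) yy(2) e(1)] by auto
  then show ?thesis
    unfolding xx(1) yy(1) GY_mul GY_mem using xx yy e by (simp add: add.assoc)
qed

lemma Ker_arr: "g_arr Ker = {x \<in> arr. c x = 0}"
  and Ker_r [simp]: "g_r Ker = rr" and Ker_s [simp]: "g_s Ker = ss" and Ker_mul [simp]: "g_mul Ker = mm"
  and Ker_id [simp]: "g_id Ker = ii"
  and Ker_top: "g_top Ker = subtopology TG (g_arr Ker)" and Ker_otop: "g_otop Ker = TO"
  unfolding Ker_def kernel_groupoid_def Let_def by auto

lemma Ker_E: "h \<in> g_arr Ker \<Longrightarrow> h \<in> arr" "h \<in> g_arr Ker \<Longrightarrow> c h = 0"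
  by (auto simp: Ker_arr)

lemma Ker_topspace: "topspace (g_top Ker) = g_arr Ker"
  unfolding Ker_top using topspace_TG by (auto simp: Ker_arr)

lemma cont_incl_Ker: "continuous_map (g_top Ker) TG (\<lambda>x. x)"
  unfolding Ker_top by (rule continuous_map_from_subtopology) simp

lemma space_Z: "space Z = diag ` arr"
  unfolding Z_def by (simp add: space_embed_measure topspace_TG)

lemma space_Z_E:
  assumes "z \<in> space Z"
  obtains \<eta> where "\<eta> \<in> arr" "z = diag \<eta>"
  using assms unfolding space_Z by blast

lemma diag_in_Z: "\<eta> \<in> arr \<Longrightarrow> diag \<eta> \<in> space Z"
  unfolding space_Z by blast

lemma measurable_from_Z:
  assumes "(\<lambda>x. g (diag x)) \<in> measurable (borel_of TG) N"
  shows "g \<in> measurable Z N"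
  unfolding Z_def by (rule measurable_embed_measure1[of g diag, OF assms])

lemma measurable_to_Z:
  assumes "h \<in> measurable M (borel_of TG)"
  shows "(\<lambda>x. diag (h x)) \<in> measurable M Z"
  unfolding Z_def by (rule measurable_compose[OF assms measurable_embed_measure2[OF inj_diag]])

lemma measurable_fst_Z: "fst \<in> measurable Z (borel_of TG)"
  by (rule measurable_from_Z) (simp add: measurable_id)

definition "rho z = st (fst z)"
definition "left_act x z = diag (mm (fst z) (iv (fst (snd x))))"
definition "sig z = rr (fst z)"
definition "right_act z h = diag (mm (iv h) (fst z))"

lemma rho_diag [simp]: "rho (diag \<eta>) = st \<eta>" and sig_diag [simp]: "sig (diag \<eta>) = rr \<eta>"
  by (simp_all add: rho_def sig_def)

lemma left_act_diag [simp]: "left_act (a,\<gamma>,b) (diag \<eta>) = diag (mm \<eta> (iv \<gamma>))"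
  and right_act_diag [simp]: "right_act (diag \<eta>) h = diag (mm (iv h) \<eta>)"
  by (simp_all add: left_act_def right_act_def)

lemma st_mul_inv:
  assumes "\<eta> \<in> arr" "\<gamma> \<in> arr" "ss \<eta> = ss \<gamma>"
  shows "mm \<eta> (iv \<gamma>) \<in> arr" "st (mm \<eta> (iv \<gamma>)) = (rr \<gamma>, c \<eta> + - c \<gamma>)"
    "rr (mm \<eta> (iv \<gamma>)) = rr \<eta>"
proof -
  have cp: "ss \<eta> = rr (iv \<gamma>)"
    using assms by (simp add: r_inv)
  show "mm \<eta> (iv \<gamma>) \<in> arr"
    using mul_arr[OF assms(1) inv_arr[OF assms(2)] cp] .
  show "st (mm \<eta> (iv \<gamma>)) = (rr \<gamma>, c \<eta> + - c \<gamma>)"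
    unfolding st_eq using s_mul[OF assms(1) inv_arr[OF assms(2)] cp] s_inv[OF assms(2)]
      c_mul[OF assms(1) inv_arr[OF assms(2)] cp] c_inv[OF assms(2)] by simp
  show "rr (mm \<eta> (iv \<gamma>)) = rr \<eta>"
    using r_mul[OF assms(1) inv_arr[OF assms(2)] cp] .
qed

lemma st_inv_mul:
  assumes "\<eta> \<in> arr" "h \<in> g_arr Ker" "rr h = rr \<eta>"
  shows "mm (iv h) \<eta> \<in> arr" "st (mm (iv h) \<eta>) = st \<eta>" "rr (mm (iv h) \<eta>) = ss h"
proof -
  have h: "h \<in> arr" "c h = 0"
    using Ker_E[OF assms(2)] by auto
  have cp: "ss (iv h) = rr \<eta>"
    using assms h by (simp add: s_inv)
  show "mm (iv h) \<eta> \<in> arr"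
    using mul_arr[OF inv_arr[OF h(1)] assms(1) cp] .
  show "st (mm (iv h) \<eta>) = st \<eta>"
    using s_mul[OF inv_arr[OF h(1)] assms(1) cp] c_mul[OF inv_arr[OF h(1)] assms(1) cp]
      c_inv[OF h(1)] h(2)
    by (simp add: st_eq)
  show "rr (mm (iv h) \<eta>) = ss h"
    using r_mul[OF inv_arr[OF h(1)] assms(1) cp] r_inv[OF h(1)] by simp
qed

lemma measurable_rho: "rho \<in> measurable Z (borel_of (g_otop GY))"
proof (rule measurable_from_Z)
  have "continuous_map TG (subtopology PT Y) st"
    by (rule continuous_map_into_subtopology[OF cont_st]) (auto simp: topspace_TG)
  then show "(\<lambda>x. rho (diag x)) \<in> measurable (borel_of TG) (borel_of (g_otop GY))"
    unfolding GY_otop by (simp add: continuous_map_measurable_borel_of)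
qed

lemma measurable_sig: "sig \<in> measurable Z (borel_of TO)"
  by (rule measurable_from_Z) (simp add: continuous_map_measurable_borel_of[OF cont_r])

lemma measurable_left_act:
  "(\<lambda>(x, z). left_act x z) \<in> measurable (restrict_space (borel_of (g_top GY) \<Otimes>\<^sub>M Z)
      {(x, z). x \<in> g_arr GY \<and> z \<in> space Z \<and> g_s GY x = rho z}) Z"
proof -
  let ?M = "restrict_space (borel_of (g_top GY) \<Otimes>\<^sub>M Z)
      {(x, z). x \<in> g_arr GY \<and> z \<in> space Z \<and> g_s GY x = rho z}"
  have f: "(\<lambda>p. fst (snd p)) \<in> measurable ?M (borel_of TG)"
    by (rule measurable_restrict_space1, rule measurable_compose[OF measurable_snd measurable_fst_Z])
  have g: "(\<lambda>p. iv (fst (snd (fst p)))) \<in> measurable ?M (borel_of TG)"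
    by (rule measurable_restrict_space1, rule measurable_compose[OF measurable_compose[OF measurable_fst
          continuous_map_measurable_borel_of[OF cont_proj_GY]] measurable_inv])
  have comp: "ss (fst (snd p)) = rr (iv (fst (snd (fst p))))" if "p \<in> space ?M" for p
  proof -
    obtain x z where pxz: "p = (x,z)"
      by (cases p)
    then have p: "p = (x,z)" "x \<in> g_arr GY" "z \<in> space Z" "g_s GY x = rho z"
      using that by (simp_all add: space_restrict_space)
    obtain \<eta> where \<eta>: "\<eta> \<in> arr" "z = diag \<eta>"
      using p(3) by (rule space_Z_E)
    obtain a \<gamma> b where xx: "x = (a,\<gamma>,b)" "\<gamma> \<in> arr"
      using p(2) by (rule GY_E)
    have "ss \<gamma> = ss \<eta>"
      using p(4) \<eta>(2) xx(1) by (simp add: st_eq)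
    then show ?thesis
      using p(1) \<eta> xx by (simp add: r_inv)
  qed
  have eq: "(\<lambda>(x, z). left_act x z) = (\<lambda>p. diag (mm (fst (snd p)) (iv (fst (snd (fst p))))))"
    by (auto simp: left_act_def fun_eq_iff)
  show ?thesis
    unfolding eq by (rule measurable_to_Z[OF measurable_mul_comp[OF f g comp]])
qed

lemma left_act_mul:
  assumes \<eta>: "\<eta> \<in> arr" and x: "x \<in> g_arr GY" and y: "y \<in> g_arr GY"
    and xy: "g_s GY x = g_r GY y" and y\<eta>: "g_s GY y = st \<eta>"
  shows "left_act (g_mul GY x y) (diag \<eta>) = left_act x (left_act y (diag \<eta>))"
proof -
  obtain a1 \<gamma>1 b1 where xx: "x = (a1,\<gamma>1,b1)" "\<gamma>1 \<in> arr"
    using x by (rule GY_E)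
  obtain a2 \<gamma>2 b2 where yy: "y = (a2,\<gamma>2,b2)" "\<gamma>2 \<in> arr"
    using y by (rule GY_E)
  have e1: "ss \<gamma>1 = rr \<gamma>2"
    using xy xx yy by simp
  have c2: "ss \<eta> = rr (iv \<gamma>2)"
    using y\<eta> yy by (simp add: r_inv st_eq)
  have c1: "ss (iv \<gamma>2) = rr (iv \<gamma>1)"
    using e1 xx yy by (simp add: r_inv s_inv)
  have "mm \<eta> (iv (mm \<gamma>1 \<gamma>2)) = mm \<eta> (mm (iv \<gamma>2) (iv \<gamma>1))"
    using inv_mul[OF xx(2) yy(2) e1] by simp
  also have "\<dots> = mm (mm \<eta> (iv \<gamma>2)) (iv \<gamma>1)"
    using assoc[OF \<eta> inv_arr[OF yy(2)] inv_arr[OF xx(2)] c2 c1] by simp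
  finally show ?thesis
    using xx yy by simp
qed

lemma left_action: "left_borel_action GY Z rho left_act"
  unfolding left_borel_action_def
proof (intro conjI ballI impI measurable_rho measurable_left_act)
  fix z x assume z: "z \<in> space Z" and x: "x \<in> g_arr GY" and sx: "g_s GY x = rho z"
  obtain \<eta> where \<eta>: "\<eta> \<in> arr" "z = diag \<eta>"
    using z by (rule space_Z_E)
  obtain a \<gamma> b where xx: "x = (a,\<gamma>,b)" "\<gamma> \<in> arr" "b = a + c \<gamma>"
    using x by (rule GY_E)
  have e: "ss \<eta> = ss \<gamma>" "c \<eta> = a + c \<gamma>"
    using sx \<eta> xx by (auto simp: st_eq)
  have "c \<eta> + - c \<gamma> = a"
    unfolding e(2) by (simp add: add.assoc)
  then show "left_act x z \<in> space Z" "rho (left_act x z) = g_r GY x"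
    using \<eta> xx st_mul_inv[OF \<eta>(1) xx(2) e(1)] diag_in_Z by simp_all
next
  fix z assume "z \<in> space Z"
  then show "left_act (g_id GY (rho z)) z = z"
    by (auto elim!: space_Z_E simp: st_eq inv_id s_obj id_right)
next
  fix z x y assume z: "z \<in> space Z" and xy: "x \<in> g_arr GY" "y \<in> g_arr GY"
    "g_s GY x = g_r GY y" and yz: "g_s GY y = rho z"
  obtain \<eta> where \<eta>: "\<eta> \<in> arr" "z = diag \<eta>"
    using z by (rule space_Z_E)
  then show "left_act (g_mul GY x y) z = left_act x (left_act y z)"
    using left_act_mul[OF \<eta>(1) xy] yz by simp
qed

lemma measurable_right_act:
  "(\<lambda>(z, x). right_act z x) \<in> measurable (restrict_space (Z \<Otimes>\<^sub>M borel_of (g_top Ker))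
      {(z, x). x \<in> g_arr Ker \<and> z \<in> space Z \<and> sig z = g_r Ker x}) Z"
proof -
  let ?M = "restrict_space (Z \<Otimes>\<^sub>M borel_of (g_top Ker))
      {(z, x). x \<in> g_arr Ker \<and> z \<in> space Z \<and> sig z = g_r Ker x}"
  have g: "(\<lambda>p. fst (fst p)) \<in> measurable ?M (borel_of TG)"
    by (rule measurable_restrict_space1, rule measurable_compose[OF measurable_fst measurable_fst_Z])
  have f: "(\<lambda>p. iv (snd p)) \<in> measurable ?M (borel_of TG)"
    by (rule measurable_restrict_space1, rule measurable_compose[OF measurable_compose[OF measurable_snd
          continuous_map_measurable_borel_of[OF cont_incl_Ker]] measurable_inv])
  have comp: "ss (iv (snd p)) = rr (fst (fst p))" if "p \<in> space ?M" for p
  proof -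
    obtain z h where pzh: "p = (z,h)"
      by (cases p)
    then have p: "p = (z,h)" "h \<in> g_arr Ker" "z \<in> space Z" "sig z = rr h"
      using that by (simp_all add: space_restrict_space)
    then show ?thesis
      using Ker_E[OF p(2)] by (auto elim!: space_Z_E simp: s_inv)
  qed
  have eq: "(\<lambda>(z, x). right_act z x) = (\<lambda>p. diag (mm (iv (snd p)) (fst (fst p))))"
    by (auto simp: right_act_def fun_eq_iff)
  show ?thesis
    unfolding eq by (rule measurable_to_Z[OF measurable_mul_comp[OF f g comp]])
qed

lemma right_act_mul:
  assumes \<eta>: "\<eta> \<in> arr" and x: "x \<in> g_arr Ker" and y: "y \<in> g_arr Ker"
    and \<eta>x: "rr \<eta> = rr x" and xy: "ss x = rr y"
  shows "right_act (diag \<eta>) (mm x y) = right_act (right_act (diag \<eta>) x) y"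
proof -
  have xa: "x \<in> arr" and ya: "y \<in> arr"
    using Ker_E x y by auto
  have c1: "ss (iv y) = rr (iv x)"
    using xy xa ya by (simp add: s_inv r_inv)
  have c2: "ss (iv x) = rr \<eta>"
    using \<eta>x xa by (simp add: s_inv)
  have "mm (iv (mm x y)) \<eta> = mm (mm (iv y) (iv x)) \<eta>"
    using inv_mul[OF xa ya xy] by simp
  also have "\<dots> = mm (iv y) (mm (iv x) \<eta>)"
    using assoc[OF inv_arr[OF ya] inv_arr[OF xa] \<eta> c1 c2] .
  finally show ?thesis
    by simp
qed

lemma right_action: "right_borel_action Ker Z sig right_act"
  unfolding right_borel_action_def Ker_otop
proof (intro conjI ballI impI measurable_sig measurable_right_act)
  fix z h assume "z \<in> space Z" "h \<in> g_arr Ker" "sig z = g_r Ker h"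
  then show "right_act z h \<in> space Z" "sig (right_act z h) = g_s Ker h"
    using st_inv_mul diag_in_Z by (auto elim!: space_Z_E)
next
  fix z assume "z \<in> space Z"
  then show "right_act z (g_id Ker (sig z)) = z"
    by (auto elim!: space_Z_E simp: inv_id r_obj id_left)
next
  fix z x y assume z: "z \<in> space Z" and xy: "x \<in> g_arr Ker" "y \<in> g_arr Ker"
    and zx: "sig z = g_r Ker x" and xy': "g_s Ker x = g_r Ker y"
  obtain \<eta> where \<eta>: "\<eta> \<in> arr" "z = diag \<eta>"
    using z by (rule space_Z_E)
  then show "right_act z (g_mul Ker x y) = right_act (right_act z x) y"
    using right_act_mul[OF \<eta>(1) xy] zx xy' by simp
qed

lemma left_free_GY: "left_free GY Z rho left_act"
  unfolding left_free_def
proof (intro ballI impI)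
  fix z x assume z: "z \<in> space Z" and x: "x \<in> g_arr GY" and sx: "g_s GY x = rho z"
    and fixed: "left_act x z = z"
  obtain \<eta> where \<eta>: "\<eta> \<in> arr" "z = diag \<eta>"
    using z by (rule space_Z_E)
  obtain a \<gamma> b where xx: "x = (a,\<gamma>,b)" "\<gamma> \<in> arr" "b = a + c \<gamma>"
    using x by (rule GY_E)
  have e: "ss \<gamma> = ss \<eta>" "b = c \<eta>"
    using sx \<eta> xx by (auto simp: st_eq)
  have cp: "ss \<eta> = rr (iv \<gamma>)"
    using e xx by (simp add: r_inv)
  have "mm \<eta> (iv \<gamma>) = \<eta>"
    using fixed \<eta> xx by simp
  from mul_eq_self_right[OF inv_arr[OF xx(2)] \<eta>(1) cp this]
  have "iv \<gamma> = ii (ss \<eta>)" .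
  then have g: "\<gamma> = ii (ss \<eta>)"
    using inv_inv[OF xx(2)] inv_id[OF s_obj[OF \<eta>(1)]] by metis
  then have "a = c \<eta>"
    using c_id[OF s_obj[OF \<eta>(1)]] xx(3) e(2) by simp
  then show "x = g_id GY (rho z)"
    using xx g e \<eta> by (simp add: st_eq)
qed

lemma right_free_Ker: "right_free Ker Z sig right_act"
  unfolding right_free_def Ker_r Ker_id
proof (intro ballI impI)
  fix z h assume z: "z \<in> space Z" and h: "h \<in> g_arr Ker" and e: "sig z = rr h"
    and fixed: "right_act z h = z"
  obtain \<eta> where \<eta>: "\<eta> \<in> arr" "z = diag \<eta>"
    using z by (rule space_Z_E)
  have ha: "h \<in> arr"
    using Ker_E(1)[OF h] .
  have cp: "ss (iv h) = rr \<eta>"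
    using e \<eta> ha by (simp add: s_inv)
  have "mm (iv h) \<eta> = \<eta>"
    using fixed \<eta> by simp
  from mul_eq_self_left[OF inv_arr[OF ha] \<eta>(1) cp this]
  have "iv h = ii (rr \<eta>)" .
  then have "h = ii (rr \<eta>)"
    using inv_inv[OF ha] inv_id[OF r_obj[OF \<eta>(1)]] by metis
  then show "h = ii (sig z)"
    using \<eta> by simp
qed

lemma actions_commute:
  assumes z: "z \<in> space Z" and x: "x \<in> g_arr GY" and h: "h \<in> g_arr Ker"
    and sx: "g_s GY x = rho z" and zh: "sig z = g_r Ker h"
  shows "rho (right_act z h) = rho z \<and> sig (left_act x z) = sig z \<and>
    right_act (left_act x z) h = left_act x (right_act z h)"
proof -
  obtain \<eta> where \<eta>: "\<eta> \<in> arr" "z = diag \<eta>"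
    using z by (rule space_Z_E)
  obtain a \<gamma> b where xx: "x = (a,\<gamma>,b)" "\<gamma> \<in> arr"
    using x by (rule GY_E)
  have e: "ss \<eta> = ss \<gamma>"
    using sx \<eta> xx by (auto simp: st_eq)
  have ha: "h \<in> arr"
    using Ker_E(1)[OF h] .
  have cp: "ss (iv h) = rr \<eta>"
    using zh \<eta> ha by (simp add: s_inv)
  have cp2: "ss \<eta> = rr (iv \<gamma>)"
    using e xx by (simp add: r_inv)
  show ?thesis
    using \<eta> xx st_mul_inv(3)[OF \<eta>(1) xx(2) e] st_inv_mul(2)[OF \<eta>(1) h] zh
      assoc[OF inv_arr[OF ha] \<eta>(1) inv_arr[OF xx(2)] cp cp2] by simp
qed

lemma right_orbit_of_same_st:
  assumes e: "\<eta> \<in> arr" "\<eta>' \<in> arr" "st \<eta> = st \<eta>'"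
  shows "\<exists>h\<in>g_arr Ker. rr \<eta> = rr h \<and> diag \<eta>' = right_act (diag \<eta>) h"
proof -
  have s: "ss \<eta> = ss \<eta>'" and cq: "c \<eta> = c \<eta>'"
    using e(3) by (auto simp: st_eq)
  have cp: "ss \<eta> = rr (iv \<eta>')"
    using s e by (simp add: r_inv)
  define h where "h = mm \<eta> (iv \<eta>')"
  have "h \<in> arr"
    unfolding h_def using mul_arr[OF e(1) inv_arr[OF e(2)] cp] .
  moreover have "c h = 0"
    unfolding h_def using c_mul[OF e(1) inv_arr[OF e(2)] cp] c_inv[OF e(2)] cq by simp
  ultimately have h: "h \<in> g_arr Ker"
    by (simp add: Ker_arr)
  have rh: "rr h = rr \<eta>"
    unfolding h_def using r_mul[OF e(1) inv_arr[OF e(2)] cp] .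
  have cp2: "ss \<eta>' = rr (iv \<eta>)"
    using s e by (simp add: r_inv)
  have cp3: "ss (iv \<eta>) = rr \<eta>"
    using e by (simp add: s_inv)
  have "iv h = mm \<eta>' (iv \<eta>)"
    unfolding h_def using inv_mul[OF e(1) inv_arr[OF e(2)] cp] inv_inv[OF e(2)] by simp
  then have "mm (iv h) \<eta> = mm \<eta>' (mm (iv \<eta>) \<eta>)"
    using assoc[OF e(2) inv_arr[OF e(1)] e(1) cp2 cp3] by simp
  also have "\<dots> = \<eta>'"
    using inv_left[OF e(1)] s id_right[OF e(2)] by simp
  finally show ?thesis
    using h rh by (intro bexI[of _ h]) auto
qed

lemma left_orbit_of_same_range:
  assumes e: "\<eta> \<in> arr" "\<eta>' \<in> arr" "rr \<eta> = rr \<eta>'"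
  shows "\<exists>x\<in>g_arr GY. g_s GY x = st \<eta> \<and> diag \<eta>' = left_act x (diag \<eta>)"
proof -
  have cp: "ss (iv \<eta>') = rr \<eta>"
    using e by (simp add: s_inv)
  define \<gamma> where "\<gamma> = mm (iv \<eta>') \<eta>"
  have "\<gamma> \<in> arr"
    unfolding \<gamma>_def using mul_arr[OF inv_arr[OF e(2)] e(1) cp] .
  moreover have "c \<gamma> = - c \<eta>' + c \<eta>"
    unfolding \<gamma>_def using c_mul[OF inv_arr[OF e(2)] e(1) cp] c_inv[OF e(2)] by simp
  moreover have "rr \<gamma> = ss \<eta>'"
    unfolding \<gamma>_def using r_mul[OF inv_arr[OF e(2)] e(1) cp] r_inv[OF e(2)] by simp
  moreover have sg: "ss \<gamma> = ss \<eta>"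
    unfolding \<gamma>_def using s_mul[OF inv_arr[OF e(2)] e(1) cp] .
  ultimately have x: "(c \<eta>', \<gamma>, c \<eta>) \<in> g_arr GY"
    unfolding GY_mem using e by (auto simp: Y_mem add.assoc[symmetric])
  have ig: "iv \<gamma> = mm (iv \<eta>) \<eta>'"
    unfolding \<gamma>_def using inv_mul[OF inv_arr[OF e(2)] e(1) cp] inv_inv[OF e(2)] by simp
  have c1: "ss \<eta> = rr (iv \<eta>)"
    using e by (simp add: r_inv)
  have c2: "ss (iv \<eta>) = rr \<eta>'"
    using e by (simp add: s_inv)
  have "mm \<eta> (iv \<gamma>) = mm (mm \<eta> (iv \<eta>)) \<eta>'"
    unfolding ig using assoc[OF e(1) inv_arr[OF e(1)] e(2) c1 c2] by simp
  also have "\<dots> = \<eta>'"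
    using inv_right[OF e(1)] e(3) id_left[OF e(2)] by simp
  finally show ?thesis
    using x sg by (intro bexI[of _ "(c \<eta>', \<gamma>, c \<eta>)"]) (auto simp: st_eq)
qed

lemma sig_eq_iff_left_orbit:
  assumes "z \<in> space Z" "z' \<in> space Z"
  shows "sig z = sig z' \<longleftrightarrow> (\<exists>x\<in>g_arr GY. g_s GY x = rho z \<and> z' = left_act x z)"
proof -
  obtain \<eta> \<eta>' where \<eta>: "\<eta> \<in> arr" "z = diag \<eta>" and \<eta>': "\<eta>' \<in> arr" "z' = diag \<eta>'"
    using assms by (metis space_Z_E)
  show ?thesis
  proof
    assume "sig z = sig z'"
    then show "\<exists>x\<in>g_arr GY. g_s GY x = rho z \<and> z' = left_act x z"
      using left_orbit_of_same_range[OF \<eta>(1) \<eta>'(1)] \<eta> \<eta>' by simp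
  next
    assume "\<exists>x\<in>g_arr GY. g_s GY x = rho z \<and> z' = left_act x z"
    then obtain x where x: "x \<in> g_arr GY" "g_s GY x = rho z" "z' = left_act x z"
      by blast
    obtain a \<gamma> b where xx: "x = (a,\<gamma>,b)" "\<gamma> \<in> arr"
      using x(1) by (rule GY_E)
    have "ss \<eta> = ss \<gamma>"
      using x(2) xx \<eta> by (simp add: st_eq)
    then show "sig z = sig z'"
      using st_mul_inv(3)[OF \<eta>(1) xx(2)] x(3) xx \<eta> by simp
  qed
qed

lemma rho_eq_iff_right_orbit:
  assumes "z \<in> space Z" "z' \<in> space Z"
  shows "rho z = rho z' \<longleftrightarrow> (\<exists>h\<in>g_arr Ker. sig z = g_r Ker h \<and> z' = right_act z h)"
proof -
  obtain \<eta> \<eta>' where \<eta>: "\<eta> \<in> arr" "z = diag \<eta>" and \<eta>': "\<eta>' \<in> arr" "z' = diag \<eta>'"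
    using assms by (metis space_Z_E)
  show ?thesis
  proof
    assume "rho z = rho z'"
    then show "\<exists>h\<in>g_arr Ker. sig z = g_r Ker h \<and> z' = right_act z h"
      using right_orbit_of_same_st[OF \<eta>(1) \<eta>'(1)] \<eta> \<eta>' by simp
  next
    assume "\<exists>h\<in>g_arr Ker. sig z = g_r Ker h \<and> z' = right_act z h"
    then show "rho z = rho z'"
      using st_inv_mul(2)[OF \<eta>(1)] \<eta> by auto
  qed
qed

lemma quotient_sig: "induces_quotient_borel_iso Z
    (\<lambda>z z'. \<exists>x\<in>g_arr GY. g_s GY x = rho z \<and> z' = left_act x z) sig (borel_of (g_otop Ker))"
  unfolding Ker_otop
proof (rule induces_quotient_borel_iso_of_section[OF sig_eq_iff_left_orbit measurable_sig])
  show "(\<lambda>u. diag (ii u)) \<in> measurable (borel_of TO) Z"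
    by (rule measurable_to_Z[OF continuous_map_measurable_borel_of[OF cont_id]])
  show "sig (diag (ii u)) = u" if "u \<in> space (borel_of TO)" for u
    using that by (simp add: topspace_TO r_id)
qed

text \<open>\<open>(c(\<eta>), \<eta>\<inverse>, e)\<close> is the arrow of \<open>G(c)|\<^sub>Y\<close> from \<open>(r(\<eta>), e)\<close> to \<open>s\<tilde>(\<eta>)\<close>.\<close>

definition "left_anchor \<eta> = (c \<eta>, iv \<eta>, (0::'q))"

lemma left_anchor_in_range_fibre:
  assumes "\<eta> \<in> arr"
  shows "left_anchor \<eta> \<in> range_fibre GY (st \<eta>)"
proof -
  have "(ss \<eta>, c \<eta>) \<in> Y"
    using assms by (auto simp: Y_mem)
  moreover have "(rr \<eta>, 0) \<in> Y"
    using assms id_arr[OF r_obj[OF assms]] s_id[OF r_obj[OF assms]] c_id[OF r_obj[OF assms]]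
    by (auto simp: Y_mem)
  ultimately have "left_anchor \<eta> \<in> g_arr GY"
    unfolding left_anchor_def GY_mem using assms by (simp add: inv_arr r_inv s_inv c_inv)
  then show ?thesis
    unfolding range_fibre_def left_anchor_def using assms by (simp add: r_inv st_eq)
qed

lemma measurable_left_anchor: "left_anchor \<in> measurable (borel_of TG) (borel_of (g_top GY))"
proof (rule continuous_map_measurable_borel_of)
  show "continuous_map TG (g_top GY) left_anchor"
    unfolding GY_top
  proof (rule continuous_map_into_subtopology)
    show "continuous_map TG QT left_anchor"
      unfolding left_anchor_def using cc cont_inv by (intro continuous_map_pairedI) auto
    show "left_anchor \<in> topspace TG \<rightarrow> g_arr GY"
      using left_anchor_in_range_fibre topspace_TG by (auto simp: range_fibre_def)
  qed
qed

lemma left_anchor_left_act: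
  assumes \<eta>: "\<eta> \<in> arr" and x: "x \<in> g_arr GY" and sx: "g_s GY x = st \<eta>"
  shows "left_anchor (fst (left_act x (diag \<eta>))) = g_mul GY x (left_anchor \<eta>)"
proof -
  obtain a \<gamma> b where xx: "x = (a,\<gamma>,b)" "\<gamma> \<in> arr" "b = a + c \<gamma>"
    using x by (rule GY_E)
  have e: "ss \<eta> = ss \<gamma>" "c \<eta> = a + c \<gamma>"
    using sx xx by (auto simp: st_eq)
  have cp: "ss \<eta> = rr (iv \<gamma>)"
    using e xx by (simp add: r_inv)
  have "c (mm \<eta> (iv \<gamma>)) = c \<eta> + - c \<gamma>"
    using c_mul[OF \<eta> inv_arr[OF xx(2)] cp] c_inv[OF xx(2)] by simp
  also have "\<dots> = a"
    unfolding e(2) by (simp add: add.assoc)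
  finally have "c (mm \<eta> (iv \<gamma>)) = a" .
  moreover have "iv (mm \<eta> (iv \<gamma>)) = mm \<gamma> (iv \<eta>)"
    using inv_mul[OF \<eta> inv_arr[OF xx(2)] cp] inv_inv[OF xx(2)] by simp
  ultimately show ?thesis
    using xx unfolding left_anchor_def by simp
qed

lemma range_fibre_GY_closed: "closedin (g_top GY) (range_fibre GY u)"
proof -
  have "continuous_map (g_top GY) PT (\<lambda>x. (rr (fst (snd x)), fst x))"
    unfolding GY_top
    by (intro continuous_map_from_subtopology continuous_map_pairedI continuous_map_fst
        continuous_map_compose[OF continuous_map_compose[OF continuous_map_snd continuous_map_fst]
          cont_r, unfolded o_def])
  then have "continuous_map (g_top GY) PT (g_r GY)"
    by (rule continuous_map_eq) auto
  moreover have "range_fibre GY u = {p \<in> topspace (g_top GY). g_r GY p = u}"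
    unfolding range_fibre_def GY_topspace by simp
  ultimately show ?thesis
    using closedin_continuous_map_fibre[OF _ Hausdorff_PT] by simp
qed

lemma continuous_map_GY_left_translation:
  assumes x: "x \<in> g_arr GY"
  shows "continuous_map (subtopology (g_top GY) (range_fibre GY (g_s GY x))) (g_top GY) (g_mul GY x)"
proof -
  obtain a \<gamma> b where xx: "x = (a,\<gamma>,b)" "\<gamma> \<in> arr"
    using x by (rule GY_E)
  let ?S = "subtopology (g_top GY) (range_fibre GY (g_s GY x))"
  let ?t = "\<lambda>y. (a, mm \<gamma> (fst (snd y)), snd (snd y))"
  have S: "y \<in> g_arr GY \<and> g_r GY y = g_s GY x" if "y \<in> topspace ?S" for y
    using that by (simp add: GY_topspace range_fibre_def)
  have "continuous_map ?S (subtopology (prod_topology TG TG) (composable G)) (\<lambda>y. (\<gamma>, fst (snd y)))"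
  proof (rule continuous_map_into_subtopology)
    show "continuous_map ?S (prod_topology TG TG) (\<lambda>y. (\<gamma>, fst (snd y)))"
      using continuous_map_from_subtopology[OF cont_proj_GY] xx topspace_TG
      by (intro continuous_map_pairedI) auto
    show "(\<lambda>y. (\<gamma>, fst (snd y))) \<in> topspace ?S \<rightarrow> composable G"
      using S xx by (fastforce elim: GY_E simp: composable_def)
  qed
  from continuous_map_compose[OF this cont_mul]
  have "continuous_map ?S TG (\<lambda>y. mm \<gamma> (fst (snd y)))"
    by (simp add: o_def)
  then have "continuous_map ?S QT ?t"
    using continuous_map_from_subtopology[OF cont_snd_snd_GY] by (intro continuous_map_pairedI) auto
  moreover have "?t y = g_mul GY x y" if "y \<in> topspace ?S" for y
    using xx by (cases y) simp
  ultimately have "continuous_map ?S QT (g_mul GY x)"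
    by (rule continuous_map_eq)
  then have "continuous_map ?S (subtopology QT (g_arr GY)) (g_mul GY x)"
    using GY_mul_closed[OF x] S by (intro continuous_map_into_subtopology) auto
  then show ?thesis
    unfolding GY_top .
qed

lemma left_proper_GY: "left_proper GY Z rho left_act"
proof (rule left_proper_of_equivariant_map)
  show "(\<lambda>z. left_anchor (fst z)) \<in> measurable Z (borel_of (g_top GY))"
    using measurable_compose[OF measurable_fst_Z measurable_left_anchor] by simp
  show "left_anchor (fst z) \<in> range_fibre GY (rho z)" if "z \<in> space Z" for z
    using that left_anchor_in_range_fibre by (auto elim: space_Z_E)
  show "range_fibre GY u \<in> sets (borel_of (g_top GY))" for u
    by (rule borel_of_closedin[OF range_fibre_GY_closed])
  show "{y \<in> range_fibre GY (g_s GY x). g_mul GY x y \<in> A} \<in> sets (borel_of (g_top GY))"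
    if "x \<in> g_arr GY" "A \<in> sets (borel_of (g_top GY))" for x A
    by (rule borel_of_preimage_closedin[OF range_fibre_GY_closed
          continuous_map_GY_left_translation[OF that(1)] that(2)])
  show "left_anchor (fst (left_act x z)) = g_mul GY x (left_anchor (fst z))"
    if z: "z \<in> space Z" and x: "x \<in> g_arr GY" "g_s GY x = rho z" for z x
  proof -
    obtain \<eta> where "\<eta> \<in> arr" "z = diag \<eta>"
      using z by (rule space_Z_E)
    then show ?thesis
      using left_anchor_left_act[of \<eta> x] x by simp
  qed
qed

context
  fixes \<psi> :: "'u \<times> 'q \<Rightarrow> 'g"
  assumes psi_in: "\<And>y. y \<in> Y \<Longrightarrow> \<psi> y \<in> arr" and psi_st: "\<And>y. y \<in> Y \<Longrightarrow> st (\<psi> y) = y"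
    and psi_measurable: "\<psi> \<in> measurable (borel_of (subtopology PT Y)) (borel_of TG)"
begin

lemma quotient_rho: "induces_quotient_borel_iso Z
    (\<lambda>z z'. \<exists>h\<in>g_arr Ker. sig z = g_r Ker h \<and> z' = right_act z h) rho (borel_of (g_otop GY))"
proof (rule induces_quotient_borel_iso_of_section[OF rho_eq_iff_right_orbit measurable_rho])
  show "(\<lambda>y. diag (\<psi> y)) \<in> measurable (borel_of (g_otop GY)) Z"
    unfolding GY_otop by (rule measurable_to_Z[OF psi_measurable])
  show "rho (diag (\<psi> y)) = y" if "y \<in> space (borel_of (g_otop GY))" for y
  proof -
    have "y \<in> Y"
      using that space_borel_of_GY_otop by simp
    then show ?thesis
      using psi_st by simp
  qed
qed

text \<open>\<open>\<psi>(s\<tilde>(\<eta>))\<eta>\<inverse>\<close> lies in \<open>c\<inverse>(e)\<close> because \<open>\<psi>(s\<tilde>(\<eta>))\<close> and \<open>\<eta>\<close> have the same source and the same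
  value under \<open>c\<close>.\<close>

definition "right_anchor \<eta> = mm (\<psi> (st \<eta>)) (iv \<eta>)"

lemma right_anchor_composable: "\<eta> \<in> arr \<Longrightarrow> ss (\<psi> (st \<eta>)) = rr (iv \<eta>)"
  using psi_st[of "st \<eta>"] by (simp add: st_eq r_inv)

lemma right_anchor_in_source_fibre:
  assumes \<eta>: "\<eta> \<in> arr"
  shows "right_anchor \<eta> \<in> source_fibre Ker (rr \<eta>)"
proof -
  have \<psi>: "\<psi> (st \<eta>) \<in> arr" "c (\<psi> (st \<eta>)) = c \<eta>"
    using psi_in[of "st \<eta>"] psi_st[of "st \<eta>"] \<eta> by (auto simp: st_eq)
  note cp = right_anchor_composable[OF \<eta>]
  have "right_anchor \<eta> \<in> arr" "c (right_anchor \<eta>) = 0" "ss (right_anchor \<eta>) = rr \<eta>"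
    unfolding right_anchor_def
    using mul_arr[OF \<psi>(1) inv_arr[OF \<eta>] cp] c_mul[OF \<psi>(1) inv_arr[OF \<eta>] cp] c_inv[OF \<eta>] \<psi>(2)
      s_mul[OF \<psi>(1) inv_arr[OF \<eta>] cp] s_inv[OF \<eta>] by simp_all
  then show ?thesis
    by (simp add: source_fibre_def Ker_arr)
qed

lemma measurable_right_anchor: "right_anchor \<in> measurable (borel_of TG) (borel_of (g_top Ker))"
  unfolding Ker_top
proof (rule measurable_borel_of_subtopologyI)
  have "st \<in> measurable (borel_of TG) (borel_of (subtopology PT Y))"
    using continuous_map_into_subtopology[OF cont_st] topspace_TG
    by (intro continuous_map_measurable_borel_of) auto
  then show "right_anchor \<in> measurable (borel_of TG) (borel_of TG)"
    unfolding right_anchor_def[abs_def] using right_anchor_composable topspace_TG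
    by (intro measurable_mul_comp measurable_compose[OF _ psi_measurable] measurable_inv) auto
  show "right_anchor \<in> space (borel_of TG) \<rightarrow> g_arr Ker"
    using right_anchor_in_source_fibre topspace_TG by (auto simp: source_fibre_def)
qed

lemma right_anchor_right_act:
  assumes \<eta>: "\<eta> \<in> arr" and h: "h \<in> g_arr Ker" and rh: "rr \<eta> = rr h"
  shows "right_anchor (fst (right_act (diag \<eta>) h)) = mm (right_anchor \<eta>) h"
proof -
  have ha: "h \<in> arr"
    using Ker_E(1)[OF h] .
  have cp: "ss (iv h) = rr \<eta>"
    using rh ha by (simp add: s_inv)
  have "iv (mm (iv h) \<eta>) = mm (iv \<eta>) h"
    using inv_mul[OF inv_arr[OF ha] \<eta> cp] inv_inv[OF ha] by simp
  moreover have "st (mm (iv h) \<eta>) = st \<eta>"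
    using st_inv_mul(2)[OF \<eta> h rh[symmetric]] .
  moreover have "ss (iv \<eta>) = rr h"
    using rh \<eta> by (simp add: s_inv)
  ultimately show ?thesis
    unfolding right_anchor_def
    using assoc[OF psi_in inv_arr[OF \<eta>] ha right_anchor_composable[OF \<eta>]] \<eta> by simp
qed

lemma source_fibre_Ker_closed: "closedin (g_top Ker) (source_fibre Ker u)"
proof -
  have "source_fibre Ker u = {p \<in> topspace (g_top Ker). ss p = u}"
    unfolding source_fibre_def Ker_topspace by simp
  moreover have "continuous_map (g_top Ker) TO ss"
    unfolding Ker_top by (rule continuous_map_from_subtopology[OF cont_s])
  ultimately show ?thesis
    using closedin_continuous_map_fibre[OF _ Hausdorff_TO] by simp
qed

lemma continuous_map_Ker_right_translation:
  assumes h: "h \<in> g_arr Ker"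
  shows "continuous_map (subtopology (g_top Ker) (source_fibre Ker (rr h))) (g_top Ker) (\<lambda>y. mm y h)"
proof -
  let ?S = "subtopology (g_top Ker) (source_fibre Ker (rr h))"
  have S: "y \<in> arr \<and> c y = 0 \<and> ss y = rr h" if "y \<in> topspace ?S" for y
    using that by (auto simp: Ker_topspace source_fibre_def Ker_arr)
  have ha: "h \<in> arr" "c h = 0"
    using Ker_E[OF h] by auto
  have "continuous_map ?S (subtopology (prod_topology TG TG) (composable G)) (\<lambda>y. (y, h))"
  proof (rule continuous_map_into_subtopology)
    show "continuous_map ?S (prod_topology TG TG) (\<lambda>y. (y, h))"
      using continuous_map_from_subtopology[OF cont_incl_Ker] ha topspace_TG
      by (intro continuous_map_pairedI) auto
    show "(\<lambda>y. (y, h)) \<in> topspace ?S \<rightarrow> composable G"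
      using S ha by (auto simp: composable_def)
  qed
  from continuous_map_compose[OF this cont_mul]
  have "continuous_map ?S TG (\<lambda>y. mm y h)"
    by (simp add: o_def)
  moreover have "mm y h \<in> g_arr Ker" if "y \<in> topspace ?S" for y
    using S[OF that] mul_arr[of y h] c_mul[of y h] ha by (simp add: Ker_arr)
  ultimately have "continuous_map ?S (subtopology TG (g_arr Ker)) (\<lambda>y. mm y h)"
    by (intro continuous_map_into_subtopology) auto
  then show ?thesis
    unfolding Ker_top .
qed

lemma right_proper_Ker: "right_proper Ker Z sig right_act"
proof (rule right_proper_of_equivariant_map)
  show "(\<lambda>z. right_anchor (fst z)) \<in> measurable Z (borel_of (g_top Ker))"
    using measurable_compose[OF measurable_fst_Z measurable_right_anchor] by simp
  show "right_anchor (fst z) \<in> source_fibre Ker (sig z)" if "z \<in> space Z" for z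
    using that right_anchor_in_source_fibre by (auto elim: space_Z_E)
  show "source_fibre Ker u \<in> sets (borel_of (g_top Ker))" for u
    by (rule borel_of_closedin[OF source_fibre_Ker_closed])
  show "{y \<in> source_fibre Ker (g_r Ker h). g_mul Ker y h \<in> A} \<in> sets (borel_of (g_top Ker))"
    if "h \<in> g_arr Ker" "A \<in> sets (borel_of (g_top Ker))" for h A
    using borel_of_preimage_closedin[OF source_fibre_Ker_closed
          continuous_map_Ker_right_translation[OF that(1)] that(2)] by simp
  show "right_anchor (fst (right_act z h)) = g_mul Ker (right_anchor (fst z)) h"
    if z: "z \<in> space Z" and h: "h \<in> g_arr Ker" "sig z = g_r Ker h" for z h
  proof -
    obtain \<eta> where "\<eta> \<in> arr" "z = diag \<eta>"
      using z by (rule space_Z_E)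
    then show ?thesis
      using right_anchor_right_act[of \<eta> h] h by simp
  qed
qed

lemma borel_equivalence: "borel_equivalence GY Ker Z rho left_act sig right_act"
  unfolding borel_equivalence_def
  using left_action left_free_GY left_proper_GY right_action right_free_Ker right_proper_Ker
    actions_commute quotient_rho quotient_sig by blast

end

lemma borel_equivalent_GY_Ker: "borel_equivalent GY Ker TYPE('g \<times> 'g)"
proof -
  have "locally_compact_nH TG"
    using lc unfolding lc_groupoid_def by simp
  then obtain \<psi> where \<psi>: "\<And>y. y \<in> Y \<Longrightarrow> \<psi> y \<in> arr \<and> st (\<psi> y) = y"
    "\<psi> \<in> measurable (borel_of (subtopology PT Y)) (borel_of TG)"
    using continuous_map_borel_section[OF cont_st Hausdorff_PT sc lh] unfolding topspace_TG by metis
  then have "borel_equivalence GY Ker Z rho left_act sig right_act"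
    by (intro borel_equivalence) auto
  then show ?thesis
    unfolding borel_equivalent_def by blast
qed

end

theorem proposition4p3:
  fixes G :: "('g,'u) tgroupoid"
    and c :: "'g \<Rightarrow> 'q::{topological_group_add, t2_space}"
  assumes "lc_groupoid G"
    and "second_countable (g_top G)"
    and "locally_Hausdorff (g_top G)"
    and "has_haar_system G"
    and "locally_compact_space (euclidean :: 'q topology)"
    and "continuous_map (g_top G) euclidean c"
    and "groupoid_hom_to G c"
    and "top_amenable (kernel_groupoid G c)"
  shows "borel_equivalent
           (restrict_groupoid (skew G c) (tilde_s G c ` g_arr G))
           (kernel_groupoid G c)
           TYPE('g \<times> 'g)"
proof -
  have "groupoid G"
    using assms(1) unfolding lc_groupoid_def topological_groupoid_def by simp
  then interpret skew_product_setting G c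
    by unfold_locales (use assms in auto)
  show ?thesis
    using borel_equivalent_GY_Ker unfolding GY_def Ker_def .
qed

end
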